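(* Let $n\ge2$, $1\le p\le n-1$, and let $\pi,\pi'\in S_n$ be $p$-resultant permutations such that $\pi^{\text{left}}$ and $\pi'^{\text{left}}$ have the same number of left-to-right maxima and $\pi^{\text{right}}$ and $\pi'^{\text{right}}$ have the same number of right-to-left minima. Then the number of configurations in $\mathcal{S}(n-1,p)$ toppling to $\pi$ equals the number toppling to $\pi'$.
   Context: For $m\ge1$, $1\le p\le m$: sites are $0,\dots,m+1$; a configuration in $\mathcal{S}(m,p)$ places $m+1$ distinct chips labeled $1,\dots,m+1$ with sites $0,m+1$ empty, one chip at each site of $\{1,\dots,m\}\setminus\{p\}$ and two chips at site $p$. Toppling: while some site holds at least two chips, choose such a site $i$ and two chips $\alpha<\beta$ there and move $\alpha$ to $i-1$, $\beta$ to $i+1$. It is known this terminates with at most one chip per site and the final configuration is independent of the choices; reading labels left to right gives a permutation in $S_{m+1}$ to which the configuration topples. $\pi\in S_n$ is $p$-resultant if some configuration in $\mathcal{S}(n-1,p)$ topples to it; for such $\pi$, $(\pi_1,\dots,\pi_{n-p})$ is a permutation of $[n-p]$, denoted $\pi^{\text{left}}$, and $\pi^{\text{right}}=(\pi_{n-p+1},\dots,\pi_n)$ is a permutation of $\{n-p+1,\dots,n\}$. A left-to-right maximum of a sequence $a_1\cdots a_k$ is an entry $a_j$ with $a_j=\max\{a_1,\dots,a_j\}$ ($a_1$ always is one); a right-to-left minimum is an entry $a_j$ with $a_j=\min\{a_j,\dots,a_k\}$. *)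

theory Defs
  imports "HOL-Library.FuncSet"
begin

text \<open>A chip configuration for parameter m: chips are labelled 1..m+1, sites are integers
  (the relevant sites being 0..m+1). A configuration maps each chip to its site; it is
  extensional (undefined outside the chip set) so that the set of configurations is finite.\<close>

definition confS :: "nat \<Rightarrow> nat \<Rightarrow> (nat \<Rightarrow> int) set" where
  "confS m p = {c \<in> {1..m+1} \<rightarrow>\<^sub>E (UNIV :: int set).
     (\<forall>k\<in>{1..m+1}. c k \<in> {1..int m}) \<and>
     (\<forall>i\<in>{1..int m} - {int p}. card {k\<in>{1..m+1}. c k = i} = 1) \<and>
     card {k\<in>{1..m+1}. c k = int p} = 2}"

definition topple_step :: "nat \<Rightarrow> (nat \<Rightarrow> int) \<Rightarrow> (nat \<Rightarrow> int) \<Rightarrow> bool" where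
  "topple_step m c c' \<longleftrightarrow> (\<exists>\<alpha> \<beta>. 1 \<le> \<alpha> \<and> \<alpha> < \<beta> \<and> \<beta> \<le> m+1 \<and> c \<alpha> = c \<beta> \<and>
      c' = c(\<alpha> := c \<alpha> - 1, \<beta> := c \<beta> + 1))"

definition stable_conf :: "nat \<Rightarrow> (nat \<Rightarrow> int) \<Rightarrow> bool" where
  "stable_conf m c \<longleftrightarrow> inj_on c {1..m+1}"

definition reading :: "nat \<Rightarrow> (nat \<Rightarrow> int) \<Rightarrow> nat list \<Rightarrow> bool" where
  "reading m c \<pi> \<longleftrightarrow> distinct \<pi> \<and> set \<pi> = {1..m+1} \<and> sorted_wrt (\<lambda>a b. c a < c b) \<pi>"

definition topples_to :: "nat \<Rightarrow> (nat \<Rightarrow> int) \<Rightarrow> nat list \<Rightarrow> bool" where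
  "topples_to m c \<pi> \<longleftrightarrow> (\<exists>c'. (topple_step m)\<^sup>*\<^sup>* c c' \<and> stable_conf m c' \<and> reading m c' \<pi>)"

definition is_perm :: "nat \<Rightarrow> nat list \<Rightarrow> bool" where
  "is_perm n \<pi> \<longleftrightarrow> distinct \<pi> \<and> set \<pi> = {1..n}"

definition p_resultant :: "nat \<Rightarrow> nat \<Rightarrow> nat list \<Rightarrow> bool" where
  "p_resultant n p \<pi> \<longleftrightarrow> (\<exists>c\<in>confS (n-1) p. topples_to (n-1) c \<pi>)"

definition perm_left :: "nat \<Rightarrow> nat \<Rightarrow> nat list \<Rightarrow> nat list" where
  "perm_left n p \<pi> = take (n - p) \<pi>"

definition perm_right :: "nat \<Rightarrow> nat \<Rightarrow> nat list \<Rightarrow> nat list" where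
  "perm_right n p \<pi> = drop (n - p) \<pi>"

definition num_ltr_max :: "nat list \<Rightarrow> nat" where
  "num_ltr_max xs = card {j. j < length xs \<and> (\<forall>i\<le>j. xs!i \<le> xs!j)}"

definition num_rtl_min :: "nat list \<Rightarrow> nat" where
  "num_rtl_min xs = card {j. j < length xs \<and> (\<forall>i. j \<le> i \<and> i < length xs \<longrightarrow> xs!j \<le> xs!i)}"

definition num_toppling_to :: "nat \<Rightarrow> nat \<Rightarrow> nat list \<Rightarrow> nat" where
  "num_toppling_to n p \<pi> = card {c \<in> confS (n-1) p. topples_to (n-1) c \<pi>}"

end

theory Submission
  imports Defs "HOL-Library.Multiset" "HOL-Library.Confluence"
begin

text \<open>Record a configuration of \<open>S(m, p)\<close> by the word \<open>w\<close> of its chips read from left to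
  right, the two chips on the doubled site \<open>p\<close> in increasing order. No site ever carries more
  than two chips, so two different topplings available in the same configuration happen at
  different sites and commute; hence the stable result does not depend on the order of the
  topplings. Toppling wave by wave, a chip dropped onto the block of consecutive chips to its right
  travels through it like one pass of bubble sort, leaving the smaller chip behind at every site
  and carrying the maximum out of the block; after the waves started at the sites
  \<open>p, p - 1, \<dots>, 1\<close> the result reads \<open>\<sigma> @ \<tau>\<close>, where \<open>(\<sigma>, \<tau>) = bubbles (take p w) (drop p w)\<close>.

  The words with a given result are counted by undoing the passes one at a time: the preimages of
  a single pass with result \<open>(\<sigma>, d)\<close> are indexed by the left-to-right maxima of \<open>\<sigma>\<close>, so the
  number of words with result \<open>\<sigma> @ \<tau>\<close> depends only on the number of left-to-right maxima of
  \<open>\<sigma>\<close> and of right-to-left minima of \<open>\<tau>\<close>. Exchanging the two chips on site \<open>p\<close> does not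
  change the result, so exactly half of these words encode configurations.\<close>

section \<open>Bubble passes\<close>

fun bubble :: "nat \<Rightarrow> nat list \<Rightarrow> nat list \<times> nat" where
  "bubble c [] = ([], c)"
| "bubble c (y # ys) = (let (r, M) = bubble (max c y) ys in (min c y # r, M))"

fun bubbles :: "nat list \<Rightarrow> nat list \<Rightarrow> nat list \<times> nat list" where
  "bubbles [] S = (S, [])"
| "bubbles (x # xs) S = (let (S', \<tau>) = bubbles xs S; (S'', d) = bubble x S' in (S'', d # \<tau>))"

lemma length_bubble: "length (fst (bubble c ys)) = length ys"
  by (induction ys arbitrary: c) (auto simp: split_beta)

lemma mset_bubble: "mset (fst (bubble c ys)) + {#snd (bubble c ys)#} = mset (c # ys)"
  by (induction ys arbitrary: c) (auto simp: split_beta max_def min_def)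

lemma snd_bubble: "snd (bubble c ys) = Max (insert c (set ys))"
proof (induction ys arbitrary: c)
  case (Cons y ys)
  then show ?case by (cases "ys = []") (auto simp: split_beta max.assoc)
qed simp

lemma bubble_below: "\<forall>y\<in>set ys. y < c \<Longrightarrow> bubble c ys = (ys, c)"
  by (induction ys) auto

lemma bubble_append:
  "bubble c (ys @ zs) = (let (r, M) = bubble c ys; (r', M') = bubble M zs in (r @ r', M'))"
  by (induction ys arbitrary: c) (auto simp: split_beta)

lemma bubble_eqD:
  assumes "bubble x S = (\<sigma>, d)"
  shows "length S = length \<sigma>" and "mset (x # S) = mset (\<sigma> @ [d])"
    and "set (x # S) = insert d (set \<sigma>)" and "\<forall>y\<in>set (x # S). y \<le> d"
  using length_bubble[of x S] mset_bubble[of x S] snd_bubble[of x S] assms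
    arg_cong[OF mset_bubble[of x S], of set_mset]
  by auto

lemma length_bubbles:
  "length (fst (bubbles xs S)) = length S" "length (snd (bubbles xs S)) = length xs"
  by (induction xs) (auto simp: split_beta length_bubble)

lemma mset_bubbles: "mset (fst (bubbles xs S)) + mset (snd (bubbles xs S)) = mset xs + mset S"
proof (induction xs)
  case (Cons x xs)
  then show ?case
    using mset_bubble[of x "fst (bubbles xs S)"]
    by (auto simp: split_beta) (metis union_mset_add_mset_left)
qed simp

lemma bubbles_Cons_eq_iff:
  "bubbles (x # xs) S = (\<sigma>, d # \<tau>) \<longleftrightarrow> (\<exists>S'. bubbles xs S = (S', \<tau>) \<and> bubble x S' = (\<sigma>, d))"
  by (auto simp: split_beta prod_eq_iff)

lemma bubbles_swap_last: "bubbles (xs @ [x]) (y # ys) = bubbles (xs @ [y]) (x # ys)"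
  by (induction xs) (auto simp: split_beta max.commute min.commute)

definition bubble_output :: "nat \<Rightarrow> nat list \<Rightarrow> nat list" where
  "bubble_output p w = (let (\<sigma>, \<tau>) = bubbles (take p w) (drop p w) in \<sigma> @ \<tau>)"

lemma mset_bubble_output: "mset (bubble_output p w) = mset w"
proof -
  have "mset (bubble_output p w) = mset (take p w) + mset (drop p w)"
    using mset_bubbles[of "take p w" "drop p w"] by (simp add: bubble_output_def split_beta)
  also have "\<dots> = mset w" by (simp flip: mset_append)
  finally show ?thesis .
qed

lemma bubble_output_swap:
  assumes "1 \<le> p" "p < length w"
  shows "bubble_output p (w[p - 1 := w ! p, p := w ! (p - 1)]) = bubble_output p w"
proof -
  define A a b B where "A = take (p - 1) w" and "a = w ! (p - 1)" and "b = w ! p"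
    and "B = drop (Suc p) w"
  have "drop (p - 1) w = a # drop p w" "drop p w = b # B"
    using assms Cons_nth_drop_Suc[of "p - 1" w] Cons_nth_drop_Suc[of p w]
    by (simp_all add: a_def b_def B_def)
  then have w: "w = A @ a # b # B" by (metis A_def append_take_drop_id)
  have lA: "length A = p - 1" using assms by (simp add: A_def)
  obtain k where k: "p = Suc k" "length A = k" using assms(1) lA by (cases p) auto
  have parts: "take p (A @ x # y # B) = A @ [x]" "drop p (A @ x # y # B) = y # B" for x y
    using k by simp_all
  have "w[p - 1 := w ! p, p := w ! (p - 1)] = (A @ a # b # B)[p - 1 := b, p := a]"
    unfolding a_def[symmetric] b_def[symmetric] using w by simp
  also have "\<dots> = A @ b # a # B" using k by (simp add: list_update_append)
  finally have "bubble_output p (w[p - 1 := w ! p, p := w ! (p - 1)]) =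
      bubble_output p (A @ b # a # B)" by simp
  also have "\<dots> = bubble_output p (A @ a # b # B)"
    by (simp only: bubble_output_def parts bubbles_swap_last)
  finally show ?thesis using w by simp
qed

section \<open>Left-to-right maxima and right-to-left minima\<close>

definition ltr_max_positions :: "nat list \<Rightarrow> nat list" where
  "ltr_max_positions xs = filter (\<lambda>j. \<forall>i\<le>j. xs ! i \<le> xs ! j) [0..<length xs]"

lemma num_ltr_max_eq_length: "num_ltr_max xs = length (ltr_max_positions xs)"
  unfolding num_ltr_max_def ltr_max_positions_def
  by (subst distinct_length_filter) (auto intro: arg_cong[where f = card])

lemma ltr_max_positions_less: "i \<in> set (ltr_max_positions xs) \<Longrightarrow> i < length xs"
  by (simp add: ltr_max_positions_def)

lemma ltr_max_position_above_prefix: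
  assumes "distinct xs" "i \<in> set (ltr_max_positions xs)"
  shows "\<forall>s\<in>set (take i xs). s < xs ! i"
  using assms by (auto simp: ltr_max_positions_def in_set_conv_nth nth_eq_iff_index_eq
      order.strict_iff_order)

lemma num_ltr_max_append_max:
  assumes "\<forall>s\<in>set S. s < d" "\<forall>b\<in>set B. b < d"
  shows "num_ltr_max (S @ d # B) = Suc (num_ltr_max S)"
proof -
  let ?P = "\<lambda>xs j. j < length xs \<and> (\<forall>i\<le>j. xs ! i \<le> xs ! j)"
  have "{j. ?P (S @ d # B) j} = insert (length S) {j. ?P S j}"
  proof (intro set_eqI iffI)
    fix j assume j: "j \<in> {j. ?P (S @ d # B) j}"
    show "j \<in> insert (length S) {j. ?P S j}"
    proof (cases "length S < j")
      case True
      then have "(S @ d # B) ! j \<in> set B" using j by (auto simp: nth_append)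
      moreover have "d \<le> (S @ d # B) ! j" using j True by (auto dest: spec[of _ "length S"])
      ultimately show ?thesis using assms(2) by fastforce
    qed (use j in \<open>auto simp: nth_append\<close>)
  qed (use assms(1) in \<open>auto simp: nth_append less_imp_le\<close>)
  moreover have "length S \<notin> {j. ?P S j}" by simp
  ultimately show ?thesis unfolding num_ltr_max_def by simp
qed

lemma num_ltr_max_take:
  "i \<le> length xs \<Longrightarrow>
    num_ltr_max (take i xs) = length (filter (\<lambda>j. \<forall>k\<le>j. xs ! k \<le> xs ! j) [0..<i])"
  unfolding num_ltr_max_eq_length ltr_max_positions_def
  by (intro arg_cong[where f = length] filter_cong) auto

lemma length_filter_upt_map:
  "map (\<lambda>i. length (filter P [0..<i])) (filter P [0..<n]) = [0..<length (filter P [0..<n])]"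
  by (induction n) auto

lemma num_ltr_max_take_ltr_max_positions:
  "map (\<lambda>i. num_ltr_max (take i xs)) (ltr_max_positions xs) = [0..<num_ltr_max xs]"
proof -
  have "map (\<lambda>i. num_ltr_max (take i xs)) (ltr_max_positions xs) =
        map (\<lambda>i. length (filter (\<lambda>j. \<forall>k\<le>j. xs ! k \<le> xs ! j) [0..<i])) (ltr_max_positions xs)"
    by (intro map_cong refl num_ltr_max_take less_imp_le ltr_max_positions_less) assumption
  then show ?thesis
    unfolding num_ltr_max_eq_length by (simp add: ltr_max_positions_def length_filter_upt_map)
qed

lemma sum_ltr_max_positions:
  "(\<Sum>i\<in>set (ltr_max_positions xs). f (num_ltr_max (take i xs))) = (\<Sum>j<num_ltr_max xs. f j)"
proof -
  have "distinct (ltr_max_positions xs)" by (simp add: ltr_max_positions_def)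
  then have "(\<Sum>i\<in>set (ltr_max_positions xs). f (num_ltr_max (take i xs))) =
      sum_list (map f (map (\<lambda>i. num_ltr_max (take i xs)) (ltr_max_positions xs)))"
    by (simp add: sum_list_distinct_conv_sum_set comp_def)
  then show ?thesis
    by (simp add: num_ltr_max_take_ltr_max_positions atLeast0LessThan
        flip: sum_set_upt_conv_sum_list_nat)
qed

lemma num_rtl_min_Cons:
  "num_rtl_min (d # \<tau>) = (if \<forall>y\<in>set \<tau>. d \<le> y then Suc (num_rtl_min \<tau>) else num_rtl_min \<tau>)"
proof -
  let ?P = "\<lambda>xs j. j < length xs \<and> (\<forall>i. j \<le> i \<and> i < length xs \<longrightarrow> xs ! j \<le> xs ! i)"
  have step: "?P (d # \<tau>) (Suc k) \<longleftrightarrow> ?P \<tau> k" for k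
  proof
    assume "?P (d # \<tau>) (Suc k)"
    then show "?P \<tau> k" by (auto dest: spec[of _ "Suc _"])
  next
    assume "?P \<tau> k"
    then show "?P (d # \<tau>) (Suc k)" by (auto simp: Suc_le_eq nth_Cons split: nat.split)
  qed
  have shift: "{j. ?P (d # \<tau>) j} - {0} = Suc ` {j. ?P \<tau> j}"
  proof (intro equalityI subsetI)
    fix j assume "j \<in> {j. ?P (d # \<tau>) j} - {0}"
    then obtain k where "j = Suc k" "?P (d # \<tau>) (Suc k)" by (cases j) auto
    then show "j \<in> Suc ` {j. ?P \<tau> j}" using step by blast
  qed (use step in blast)
  have zero: "0 \<in> {j. ?P (d # \<tau>) j} \<longleftrightarrow> (\<forall>y\<in>set \<tau>. d \<le> y)"
  proof
    assume zero: "0 \<in> {j. ?P (d # \<tau>) j}"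
    show "\<forall>y\<in>set \<tau>. d \<le> y"
    proof
      fix y assume "y \<in> set \<tau>"
      then obtain k where "k < length \<tau>" "\<tau> ! k = y" by (auto simp: in_set_conv_nth)
      then show "d \<le> y" using zero by (auto dest: spec[of _ "Suc k"])
    qed
  qed (auto simp: nth_Cons split: nat.split)
  let ?A = "{j. ?P (d # \<tau>) j}"
  have card_shift: "card (?A - {0}) = num_rtl_min \<tau>"
    unfolding shift num_rtl_min_def by (simp add: card_image)
  show ?thesis
  proof (cases "\<forall>y\<in>set \<tau>. d \<le> y")
    case True
    then have "0 \<in> ?A" using zero by blast
    then have "card ?A = Suc (card (?A - {0}))" by (intro card.remove) auto
    then show ?thesis using True card_shift unfolding num_rtl_min_def by simp
  next
    case False
    then have "0 \<notin> ?A" by (simp only: zero) simp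
    then have "?A - {0} = ?A" by (intro Diff_triv) simp
    then show ?thesis using False card_shift unfolding num_rtl_min_def by simp
  qed
qed

section \<open>Preimages of bubble passes\<close>

definition bubble_preimages :: "nat list \<Rightarrow> nat \<Rightarrow> (nat \<times> nat list) set" where
  "bubble_preimages \<sigma> d = {(x, S). bubble x S = (\<sigma>, d)}"

lemma finite_bubble_preimages: "finite (bubble_preimages \<sigma> d)"
proof -
  let ?A = "insert d (set \<sigma>)"
  have "bubble_preimages \<sigma> d \<subseteq> ?A \<times> {S. set S \<subseteq> ?A \<and> length S = length \<sigma>}"
    unfolding bubble_preimages_def using bubble_eqD(1,3) by fastforce
  moreover have "finite (?A \<times> {S. set S \<subseteq> ?A \<and> length S = length \<sigma>})"
    by (intro finite_cartesian_product finite_lists_length_eq) auto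
  ultimately show ?thesis by (rule finite_subset)
qed

lemma bubble_preimages_empty:
  assumes "\<not> (\<forall>s\<in>set \<sigma>. s < d)" "d \<notin> set \<sigma>"
  shows "bubble_preimages \<sigma> d = {}"
proof (rule ccontr)
  assume "bubble_preimages \<sigma> d \<noteq> {}"
  then obtain x S where "bubble x S = (\<sigma>, d)" by (auto simp: bubble_preimages_def)
  then have "\<forall>s\<in>set \<sigma>. s \<le> d" using bubble_eqD(3,4) by (metis insert_iff)
  then show False using assms by (metis order.not_eq_order_implies_strict)
qed

definition bubble_preimages_at :: "nat list \<Rightarrow> nat \<Rightarrow> nat \<Rightarrow> (nat \<times> nat list) set" where
  "bubble_preimages_at \<sigma> d i =
    (\<lambda>(x, S). (x, S @ d # drop (Suc i) \<sigma>)) ` bubble_preimages (take i \<sigma>) (\<sigma> ! i)"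

lemma finite_bubble_preimages_at: "finite (bubble_preimages_at \<sigma> d i)"
  by (simp add: bubble_preimages_at_def finite_bubble_preimages)

context
  fixes \<sigma> :: "nat list" and d :: nat
  assumes distinct: "distinct \<sigma>" and below: "\<forall>s\<in>set \<sigma>. s < d"
begin

lemma bubble_preimage_distinct:
  assumes "bubble x S = (\<sigma>, d)"
  shows "distinct (x # S)"
  using distinct below mset_eq_imp_distinct_iff[OF bubble_eqD(2)[OF assms]] by auto

lemma bubble_preimage_trivial:
  assumes "bubble d S = (\<sigma>, d)"
  shows "S = \<sigma>"
proof -
  have "\<forall>y\<in>set S. y < d"
    using bubble_preimage_distinct[OF assms] bubble_eqD(4)[OF assms]
    by (auto simp: order.strict_iff_order)
  then show ?thesis using assms bubble_below by simp
qed

lemma bubble_preimage_nontrivial: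
  assumes "(x, S) \<in> bubble_preimages \<sigma> d" "(x, S) \<noteq> (d, \<sigma>)"
  shows "d \<in> set S"
  using assms bubble_eqD(3) bubble_preimage_trivial
  by (fastforce simp: bubble_preimages_def)

lemma bubble_preimage_split:
  assumes "bubble x S' = (\<sigma>, d)" "x \<noteq> d"
  obtains i S where "i \<in> set (ltr_max_positions \<sigma>)" "bubble x S = (take i \<sigma>, \<sigma> ! i)"
    "S' = S @ d # drop (Suc i) \<sigma>"
proof -
  have "d \<in> set S'" using bubble_eqD(3)[OF assms(1)] assms(2) by auto
  then obtain S B where S': "S' = S @ d # B" by (meson split_list)
  have "\<forall>y\<in>set (x # S) \<union> set B. y < d"
    using bubble_preimage_distinct[OF assms(1)] bubble_eqD(4)[OF assms(1)] S'
    by (auto simp: order.strict_iff_order)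
  moreover obtain r M where bS: "bubble x S = (r, M)" by fastforce
  moreover have "M \<in> set (x # S)" using bubble_eqD(3)[OF bS] by simp
  ultimately have "bubble x S' = (r @ M # B, d)"
    using S' bubble_below[of B d] by (auto simp: bubble_append)
  then have \<sigma>: "\<sigma> = r @ M # B" using assms(1) by simp
  have "\<forall>s\<in>set r. s \<le> M" using bubble_eqD(3,4)[OF bS] by auto
  then have "length r \<in> set (ltr_max_positions \<sigma>)"
    unfolding ltr_max_positions_def \<sigma> by (auto simp: nth_append)
  moreover have "take (length r) \<sigma> = r" "\<sigma> ! length r = M" "drop (Suc (length r)) \<sigma> = B"
    unfolding \<sigma> by auto
  ultimately show ?thesis using that[of "length r" S] bS S' by simp
qed

lemma bubble_extend_preimage:
  assumes "i < length \<sigma>" "bubble x S = (take i \<sigma>, \<sigma> ! i)"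
  shows "bubble x (S @ d # drop (Suc i) \<sigma>) = (\<sigma>, d)"
proof -
  have "bubble d (drop (Suc i) \<sigma>) = (drop (Suc i) \<sigma>, d)"
    using below by (intro bubble_below) (auto dest: in_set_dropD)
  then have "bubble x (S @ d # drop (Suc i) \<sigma>) = (take i \<sigma> @ \<sigma> ! i # drop (Suc i) \<sigma>, d)"
    using assms below by (simp add: bubble_append)
  then show ?thesis using id_take_nth_drop[OF assms(1)] by simp
qed

text \<open>The carried maximum \<open>d\<close> was either the inserted entry itself or was picked up inside \<open>S\<close>;
  in the second case the entry left in front of \<open>d\<close> is a left-to-right maximum of \<open>\<sigma>\<close>.\<close>
lemma bubble_preimages_eq:
  "bubble_preimages \<sigma> d =
    insert (d, \<sigma>) (\<Union>i\<in>set (ltr_max_positions \<sigma>). bubble_preimages_at \<sigma> d i)"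
proof (intro equalityI subsetI)
  fix e assume "e \<in> bubble_preimages \<sigma> d"
  then obtain x S' where e: "e = (x, S')" and b: "bubble x S' = (\<sigma>, d)"
    unfolding bubble_preimages_def by auto
  show "e \<in> insert (d, \<sigma>) (\<Union>i\<in>set (ltr_max_positions \<sigma>). bubble_preimages_at \<sigma> d i)"
  proof (cases "x = d")
    case True
    then show ?thesis using e b bubble_preimage_trivial by simp
  next
    case False
    with b obtain i S where "i \<in> set (ltr_max_positions \<sigma>)" "bubble x S = (take i \<sigma>, \<sigma> ! i)"
      "S' = S @ d # drop (Suc i) \<sigma>"
      by (rule bubble_preimage_split)
    then show ?thesis using e by (force simp: bubble_preimages_at_def bubble_preimages_def)
  qed
qed (use below bubble_below bubble_extend_preimage ltr_max_positions_less
    in \<open>auto simp: bubble_preimages_at_def bubble_preimages_def\<close>)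

lemma bubble_preimage_at_prefix:
  assumes "i \<in> set (ltr_max_positions \<sigma>)" "(x, S) \<in> bubble_preimages (take i \<sigma>) (\<sigma> ! i)"
  shows "length S = i" and "\<forall>s\<in>set S. s < d"
proof -
  have b: "bubble x S = (take i \<sigma>, \<sigma> ! i)" using assms(2) by (simp add: bubble_preimages_def)
  have il: "i < length \<sigma>" using assms(1) by (rule ltr_max_positions_less)
  show "length S = i" using bubble_eqD(1)[OF b] il by simp
  have "set (x # S) \<subseteq> set \<sigma>" using bubble_eqD(3)[OF b] il by (auto dest: in_set_takeD)
  then show "\<forall>s\<in>set S. s < d" using below by auto
qed

lemma bubble_preimages_at_disjoint:
  assumes "i \<in> set (ltr_max_positions \<sigma>)" "j \<in> set (ltr_max_positions \<sigma>)" "i \<noteq> j"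
  shows "bubble_preimages_at \<sigma> d i \<inter> bubble_preimages_at \<sigma> d j = {}"
proof (rule ccontr)
  assume "\<not> ?thesis"
  then obtain x S x' S' where
    P: "(x, S) \<in> bubble_preimages (take i \<sigma>) (\<sigma> ! i)"
      "(x', S') \<in> bubble_preimages (take j \<sigma>) (\<sigma> ! j)"
    and eq: "S @ d # drop (Suc i) \<sigma> = S' @ d # drop (Suc j) \<sigma>"
    by (auto simp: bubble_preimages_at_def disjoint_iff)
  have "d \<notin> set S" using bubble_preimage_at_prefix(2)[OF assms(1) P(1)] by blast
  moreover have "d \<notin> set (drop (Suc i) \<sigma>)" using below by (auto dest: in_set_dropD)
  ultimately have "S = S'" using eq by (simp add: append_Cons_eq_iff)
  then show False
    using bubble_preimage_at_prefix(1)[OF assms(1) P(1)]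
      bubble_preimage_at_prefix(1)[OF assms(2) P(2)] assms(3) by simp
qed

lemma sum_bubble_preimages_at:
  assumes "i \<in> set (ltr_max_positions \<sigma>)"
  shows "(\<Sum>(x, S)\<in>bubble_preimages_at \<sigma> d i. G (num_ltr_max S)) =
    (\<Sum>(x, S)\<in>bubble_preimages (take i \<sigma>) (\<sigma> ! i). G (Suc (num_ltr_max S)))"
proof -
  have "inj_on (\<lambda>(x, S). (x, S @ d # drop (Suc i) \<sigma>)) (bubble_preimages (take i \<sigma>) (\<sigma> ! i))"
    by (auto simp: inj_on_def)
  then have "(\<Sum>(x, S)\<in>bubble_preimages_at \<sigma> d i. G (num_ltr_max S)) =
      (\<Sum>(x, S)\<in>bubble_preimages (take i \<sigma>) (\<sigma> ! i). G (num_ltr_max (S @ d # drop (Suc i) \<sigma>)))"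
    by (simp add: bubble_preimages_at_def sum.reindex case_prod_unfold)
  also have "\<dots> = (\<Sum>(x, S)\<in>bubble_preimages (take i \<sigma>) (\<sigma> ! i). G (Suc (num_ltr_max S)))"
  proof (intro sum.cong refl, clarify)
    fix x S assume "(x, S) \<in> bubble_preimages (take i \<sigma>) (\<sigma> ! i)"
    then have "\<forall>s\<in>set S. s < d" by (rule bubble_preimage_at_prefix(2)[OF assms])
    moreover have "\<forall>b\<in>set (drop (Suc i) \<sigma>). b < d" using below by (auto dest: in_set_dropD)
    ultimately show "G (num_ltr_max (S @ d # drop (Suc i) \<sigma>)) = G (Suc (num_ltr_max S))"
      by (simp add: num_ltr_max_append_max)
  qed
  finally show ?thesis .
qed

lemma sum_bubble_preimages_unfold:
  "(\<Sum>(x, S)\<in>bubble_preimages \<sigma> d. G (num_ltr_max S)) = G (num_ltr_max \<sigma>) +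
    (\<Sum>i\<in>set (ltr_max_positions \<sigma>).
      \<Sum>(x, S)\<in>bubble_preimages (take i \<sigma>) (\<sigma> ! i). G (Suc (num_ltr_max S)))"
proof -
  let ?I = "set (ltr_max_positions \<sigma>)"
  have "d \<notin> set \<sigma>" using below by blast
  then have "(d, \<sigma>) \<notin> (\<Union>i\<in>?I. bubble_preimages_at \<sigma> d i)"
    by (auto simp: bubble_preimages_at_def in_set_conv_decomp)
  then have "(\<Sum>(x, S)\<in>bubble_preimages \<sigma> d. G (num_ltr_max S)) =
      G (num_ltr_max \<sigma>) + (\<Sum>(x, S)\<in>(\<Union>i\<in>?I. bubble_preimages_at \<sigma> d i). G (num_ltr_max S))"
    unfolding bubble_preimages_eq using finite_bubble_preimages_at by simp
  also have "(\<Sum>(x, S)\<in>(\<Union>i\<in>?I. bubble_preimages_at \<sigma> d i). G (num_ltr_max S)) =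
      (\<Sum>i\<in>?I. \<Sum>(x, S)\<in>bubble_preimages_at \<sigma> d i. G (num_ltr_max S))"
    using bubble_preimages_at_disjoint
    by (intro sum.UNION_disjoint) (auto simp: finite_bubble_preimages_at)
  finally show ?thesis by (simp add: sum_bubble_preimages_at)
qed

end

fun bubble_preimage_sum :: "nat \<Rightarrow> (nat \<Rightarrow> nat) \<Rightarrow> nat" where
  "bubble_preimage_sum k G = G k + (\<Sum>j<k. bubble_preimage_sum j (\<lambda>i. G (Suc i)))"

declare bubble_preimage_sum.simps [simp del]

lemma sum_bubble_preimages:
  assumes "distinct \<sigma>" "\<forall>s\<in>set \<sigma>. s < d"
  shows "(\<Sum>(x, S)\<in>bubble_preimages \<sigma> d. G (num_ltr_max S)) = bubble_preimage_sum (num_ltr_max \<sigma>) G"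
  using assms
proof (induction "length \<sigma>" arbitrary: \<sigma> d G rule: less_induct)
  case less
  have "(\<Sum>(x, S)\<in>bubble_preimages (take i \<sigma>) (\<sigma> ! i). G (Suc (num_ltr_max S))) =
      bubble_preimage_sum (num_ltr_max (take i \<sigma>)) (\<lambda>j. G (Suc j))"
    if "i \<in> set (ltr_max_positions \<sigma>)" for i
    using less.hyps[of "take i \<sigma>"] ltr_max_positions_less[OF that] less.prems(1)
      ltr_max_position_above_prefix[OF less.prems(1) that] by simp
  then have "(\<Sum>(x, S)\<in>bubble_preimages \<sigma> d. G (num_ltr_max S)) = G (num_ltr_max \<sigma>) +
      (\<Sum>i\<in>set (ltr_max_positions \<sigma>). bubble_preimage_sum (num_ltr_max (take i \<sigma>)) (\<lambda>j. G (Suc j)))"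
    by (simp add: sum_bubble_preimages_unfold[OF less.prems])
  also have "\<dots> = bubble_preimage_sum (num_ltr_max \<sigma>) G"
    using sum_ltr_max_positions[of "\<lambda>k. bubble_preimage_sum k (\<lambda>j. G (Suc j))" \<sigma>]
    by (simp add: bubble_preimage_sum.simps[of "num_ltr_max \<sigma>"])
  finally show ?case .
qed

definition bubbles_preimages :: "nat list \<Rightarrow> nat list \<Rightarrow> (nat list \<times> nat list) set" where
  "bubbles_preimages \<sigma> \<tau> = {(xs, S). bubbles xs S = (\<sigma>, \<tau>)}"

lemma bubbles_preimages_Nil: "bubbles_preimages \<sigma> [] = {([], \<sigma>)}"
proof -
  have "bubbles xs S = (\<sigma>, []) \<longleftrightarrow> xs = [] \<and> S = \<sigma>" for xs S
    using length_bubbles(2)[of xs S] by (cases xs) (auto simp: split_beta)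
  then show ?thesis by (auto simp: bubbles_preimages_def)
qed

lemma bubbles_preimages_Cons:
  "bubbles_preimages \<sigma> (d # \<tau>) =
    (\<Union>(x, S')\<in>bubble_preimages \<sigma> d. (\<lambda>(xs, S). (x # xs, S)) ` bubbles_preimages S' \<tau>)"
proof (intro equalityI subsetI)
  fix e assume "e \<in> bubbles_preimages \<sigma> (d # \<tau>)"
  then obtain xs S where e: "e = (xs, S)" and b: "bubbles xs S = (\<sigma>, d # \<tau>)"
    by (auto simp: bubbles_preimages_def)
  then obtain x xs' where "xs = x # xs'"
    using length_bubbles(2)[of xs S] by (cases xs) auto
  then obtain S' where "bubbles xs' S = (S', \<tau>)" "bubble x S' = (\<sigma>, d)"
    using b bubbles_Cons_eq_iff by blast
  then show "e \<in> (\<Union>(x, S')\<in>bubble_preimages \<sigma> d. (\<lambda>(xs, S). (x # xs, S)) ` bubbles_preimages S' \<tau>)"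
    using e \<open>xs = x # xs'\<close> by (force simp: bubbles_preimages_def bubble_preimages_def)
next
  fix e
  assume "e \<in> (\<Union>(x, S')\<in>bubble_preimages \<sigma> d. (\<lambda>(xs, S). (x # xs, S)) ` bubbles_preimages S' \<tau>)"
  then obtain x S' xs S where "bubble x S' = (\<sigma>, d)" "bubbles xs S = (S', \<tau>)" "e = (x # xs, S)"
    by (auto simp: bubbles_preimages_def bubble_preimages_def)
  then show "e \<in> bubbles_preimages \<sigma> (d # \<tau>)" by (simp add: bubbles_preimages_def)
qed

lemma finite_bubbles_preimages: "finite (bubbles_preimages \<sigma> \<tau>)"
proof (induction \<tau> arbitrary: \<sigma>)
  case (Cons d \<tau>)
  then show ?case
    unfolding bubbles_preimages_Cons using finite_bubble_preimages by auto
qed (simp add: bubbles_preimages_Nil)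

lemma card_bubbles_preimages_Cons:
  "card (bubbles_preimages \<sigma> (d # \<tau>)) =
    (\<Sum>(x, S')\<in>bubble_preimages \<sigma> d. card (bubbles_preimages S' \<tau>))"
proof -
  have "card (bubbles_preimages \<sigma> (d # \<tau>)) =
      (\<Sum>(x, S')\<in>bubble_preimages \<sigma> d. card ((\<lambda>(xs, S). (x # xs, S)) ` bubbles_preimages S' \<tau>))"
    unfolding bubbles_preimages_Cons split_def
    by (intro card_UN_disjoint finite_bubble_preimages finite_imageI finite_bubbles_preimages
        ballI impI) (auto simp: bubbles_preimages_def)
  also have "\<dots> = (\<Sum>(x, S')\<in>bubble_preimages \<sigma> d. card (bubbles_preimages S' \<tau>))"
    by (intro sum.cong refl) (auto intro!: card_image simp: inj_on_def)
  finally show ?thesis .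
qed

fun bubbles_preimage_count :: "nat \<Rightarrow> nat \<Rightarrow> nat" where
  "bubbles_preimage_count k 0 = 1"
| "bubbles_preimage_count k (Suc r) = bubble_preimage_sum k (\<lambda>j. bubbles_preimage_count j r)"

context
  fixes \<sigma> :: "nat list" and d :: nat
  assumes distinct: "distinct \<sigma>" and below: "\<forall>s\<in>set \<sigma>. s < d"
begin

lemma bubble_preimage_remainder:
  "(x, S) \<in> bubble_preimages \<sigma> d \<Longrightarrow> distinct S \<and> set S \<subseteq> insert d (set \<sigma>)"
  using bubble_preimage_distinct[OF distinct below] bubble_eqD(3)
  by (fastforce simp: bubble_preimages_def)

lemma sum_count_bubble_preimages_min:
  assumes "\<forall>t\<in>set \<tau>. d < t"
  shows "(\<Sum>(x, S)\<in>bubble_preimages \<sigma> d. if \<forall>s\<in>set S. \<forall>t\<in>set \<tau>. s < t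
      then bubbles_preimage_count (num_ltr_max S) r else 0) =
    bubbles_preimage_count (num_ltr_max \<sigma>) (Suc r)"
proof -
  have above: "\<forall>s\<in>insert d (set \<sigma>). \<forall>t\<in>set \<tau>. s < t" using assms below by force
  have "(\<Sum>(x, S)\<in>bubble_preimages \<sigma> d. if \<forall>s\<in>set S. \<forall>t\<in>set \<tau>. s < t
      then bubbles_preimage_count (num_ltr_max S) r else 0) =
      (\<Sum>(x, S)\<in>bubble_preimages \<sigma> d. bubbles_preimage_count (num_ltr_max S) r)"
    using bubble_preimage_remainder above by (intro sum.cong refl) fastforce
  also have "\<dots> = bubbles_preimage_count (num_ltr_max \<sigma>) (Suc r)"
    using sum_bubble_preimages[OF distinct below] by simp
  finally show ?thesis .
qed

lemma sum_count_bubble_preimages_not_min: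
  assumes "t \<in> set \<tau>" "t < d"
  shows "(\<Sum>(x, S)\<in>bubble_preimages \<sigma> d. if \<forall>s\<in>set S. \<forall>t\<in>set \<tau>. s < t
      then bubbles_preimage_count (num_ltr_max S) r else 0) =
    (if \<forall>s\<in>set \<sigma>. \<forall>t\<in>set \<tau>. s < t then bubbles_preimage_count (num_ltr_max \<sigma>) r else 0)"
    (is "(\<Sum>(x, S)\<in>_. ?count S) = _")
proof -
  have "(d, \<sigma>) \<in> bubble_preimages \<sigma> d"
    using below bubble_below by (simp add: bubble_preimages_def)
  then have "(\<Sum>(x, S)\<in>bubble_preimages \<sigma> d. ?count S) =
      ?count \<sigma> + (\<Sum>(x, S)\<in>bubble_preimages \<sigma> d - {(d, \<sigma>)}. ?count S)"
    by (simp add: sum.remove finite_bubble_preimages)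
  also have "(\<Sum>(x, S)\<in>bubble_preimages \<sigma> d - {(d, \<sigma>)}. ?count S) = 0"
  proof (intro sum.neutral ballI)
    fix e assume e: "e \<in> bubble_preimages \<sigma> d - {(d, \<sigma>)}"
    obtain x S where xS: "e = (x, S)" by fastforce
    then have "d \<in> set S" using e bubble_preimage_nontrivial[OF distinct below] by blast
    then have "\<not> (\<forall>s\<in>set S. \<forall>t\<in>set \<tau>. s < t)" using assms by force
    then show "(case e of (x, S) \<Rightarrow> ?count S) = 0" using xS by auto
  qed
  finally show ?thesis by simp
qed

end

theorem card_bubbles_preimages:
  assumes "distinct (\<sigma> @ \<tau>)"
  shows "card (bubbles_preimages \<sigma> \<tau>) =
    (if \<forall>s\<in>set \<sigma>. \<forall>t\<in>set \<tau>. s < t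
     then bubbles_preimage_count (num_ltr_max \<sigma>) (num_rtl_min \<tau>) else 0)"
  using assms
proof (induction \<tau> arbitrary: \<sigma>)
  case Nil
  then show ?case by (simp add: bubbles_preimages_Nil num_rtl_min_def)
next
  case (Cons d \<tau>)
  show ?case
  proof (cases "\<forall>s\<in>set \<sigma>. s < d")
    case False
    then have "bubble_preimages \<sigma> d = {}"
      using Cons.prems by (intro bubble_preimages_empty) auto
    then show ?thesis using False by (auto simp: card_bubbles_preimages_Cons)
  next
    case below: True
    have distinct: "distinct \<sigma>" using Cons.prems by simp
    have "card (bubbles_preimages \<sigma> (d # \<tau>)) = (\<Sum>(x, S)\<in>bubble_preimages \<sigma> d.
        if \<forall>s\<in>set S. \<forall>t\<in>set \<tau>. s < t
        then bubbles_preimage_count (num_ltr_max S) (num_rtl_min \<tau>) else 0)"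
      unfolding card_bubbles_preimages_Cons
    proof (intro sum.cong refl, clarify)
      fix x S assume "(x, S) \<in> bubble_preimages \<sigma> d"
      then have "distinct (S @ \<tau>)"
        using bubble_preimage_remainder[OF distinct below] Cons.prems by fastforce
      then show "card (bubbles_preimages S \<tau>) = (if \<forall>s\<in>set S. \<forall>t\<in>set \<tau>. s < t
          then bubbles_preimage_count (num_ltr_max S) (num_rtl_min \<tau>) else 0)"
        by (rule Cons.IH)
    qed
    also have "\<dots> = (if \<forall>s\<in>set \<sigma>. \<forall>t\<in>set (d # \<tau>). s < t
        then bubbles_preimage_count (num_ltr_max \<sigma>) (num_rtl_min (d # \<tau>)) else 0)"
    proof (cases "\<forall>t\<in>set \<tau>. d < t")
      case True
      then have "\<forall>s\<in>set \<sigma>. \<forall>t\<in>set (d # \<tau>). s < t" using below by force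
      then show ?thesis using True sum_count_bubble_preimages_min[OF distinct below True]
        by (simp add: num_rtl_min_Cons less_imp_le)
    next
      case False
      then obtain t where t: "t \<in> set \<tau>" "t < d"
        using Cons.prems by (metis distinct.simps(2) distinct_append not_less_iff_gr_or_eq)
      then have "num_rtl_min (d # \<tau>) = num_rtl_min \<tau>"
        using num_rtl_min_Cons[of d \<tau>] by (metis leD)
      moreover have "(\<forall>s\<in>set \<sigma>. \<forall>t\<in>set (d # \<tau>). s < t) \<longleftrightarrow> (\<forall>s\<in>set \<sigma>. \<forall>t\<in>set \<tau>. s < t)"
        using below by auto
      ultimately show ?thesis
        by (simp only: sum_count_bubble_preimages_not_min[OF distinct below t])
    qed
    finally show ?thesis .
  qed
qed

lemma twice_card_ordered_bubble_output_preimage: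
  assumes "1 \<le> p" "p < length \<pi>" "distinct \<pi>"
  shows "2 * card {w. bubble_output p w = \<pi> \<and> w ! (p - 1) < w ! p} =
    card {w. bubble_output p w = \<pi>}"
proof -
  define swap where "swap w = w[p - 1 := w ! p, p := w ! (p - 1)]" for w :: "nat list"
  let ?F = "{w. bubble_output p w = \<pi>}"
  let ?A = "{w \<in> ?F. w ! (p - 1) < w ! p}" and ?B = "{w \<in> ?F. w ! p < w ! (p - 1)}"
  have mset: "mset w = mset \<pi>" if "w \<in> ?F" for w using that mset_bubble_output[of p w] by simp
  have F: "length w = length \<pi>" "distinct w" "set w = set \<pi>" if "w \<in> ?F" for w
    using mset_eq_length[OF mset[OF that]] mset_eq_imp_distinct_iff[OF mset[OF that]]
      mset_eq_setD[OF mset[OF that]] assms(3) by simp_all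
  have finite: "finite ?F"
  proof (rule finite_subset)
    show "?F \<subseteq> {w. set w \<subseteq> set \<pi> \<and> length w = length \<pi>}" using F by blast
  qed (simp add: finite_lists_length_eq)
  have p: "p - 1 \<noteq> p" "p - 1 < length \<pi>" using assms(1,2) by auto
  have swap_nth: "swap w ! (p - 1) = w ! p" "swap w ! p = w ! (p - 1)" if "w \<in> ?F" for w
    using F(1)[OF that] p assms(2) by (simp_all add: swap_def)
  have swap_swap: "swap (swap w) = w" if "w \<in> ?F" for w
    using F(1)[OF that] p assms(2) by (intro nth_equalityI) (auto simp: swap_def nth_list_update)
  have swap_F: "swap w \<in> ?F" if "w \<in> ?F" for w
    using that F(1)[OF that] assms(1,2) bubble_output_swap[of p w] by (simp add: swap_def)
  have "w ! (p - 1) \<noteq> w ! p" if "w \<in> ?F" for w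
    using F[OF that] p assms(2) by (simp add: nth_eq_iff_index_eq)
  then have split: "?F = ?A \<union> ?B" by (auto simp: linorder_neq_iff)
  have image: "swap ` ?A = ?B"
  proof (intro equalityI subsetI)
    fix w assume "w \<in> ?B"
    then have "swap w \<in> ?A" "w = swap (swap w)" using swap_F swap_nth swap_swap by auto
    then show "w \<in> swap ` ?A" by blast
  qed (use swap_F swap_nth in auto)
  have "inj_on swap ?A" by (rule inj_onI) (metis (no_types, lifting) mem_Collect_eq swap_swap)
  from card_image[OF this] have "card ?B = card ?A" unfolding image .
  have "card ?F = card (?A \<union> ?B)" using split by (rule arg_cong)
  also have "\<dots> = card ?A + card ?B" using finite by (intro card_Un_disjoint) auto
  finally show ?thesis using \<open>card ?B = card ?A\<close> by simp
qed

lemma bij_betw_bubble_output_preimages: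
  assumes "p \<le> length \<pi>"
  shows "bij_betw (\<lambda>w. (take p w, drop p w)) {w. bubble_output p w = \<pi>}
    (bubbles_preimages (take (length \<pi> - p) \<pi>) (drop (length \<pi> - p) \<pi>))"
proof (rule bij_betw_byWitness[where f' = "\<lambda>(xs, S). xs @ S"])
  let ?h = "length \<pi> - p"
  show "(\<lambda>w. (take p w, drop p w)) ` {w. bubble_output p w = \<pi>} \<subseteq>
      bubbles_preimages (take ?h \<pi>) (drop ?h \<pi>)"
  proof (rule image_subsetI)
    fix w assume "w \<in> {w. bubble_output p w = \<pi>}"
    then have out: "bubble_output p w = \<pi>" by simp
    obtain \<sigma> \<tau> where b: "bubbles (take p w) (drop p w) = (\<sigma>, \<tau>)" by fastforce
    have "length w = length \<pi>" using mset_bubble_output[of p w] out by (metis size_mset)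
    then have "length \<sigma> = ?h" using length_bubbles(1)[of "take p w" "drop p w"] b by simp
    moreover have "\<pi> = \<sigma> @ \<tau>" using out b by (simp add: bubble_output_def)
    ultimately show "(take p w, drop p w) \<in> bubbles_preimages (take ?h \<pi>) (drop ?h \<pi>)"
      using b by (simp add: bubbles_preimages_def)
  qed
  show "(\<lambda>(xs, S). xs @ S) ` bubbles_preimages (take ?h \<pi>) (drop ?h \<pi>) \<subseteq> {w. bubble_output p w = \<pi>}"
  proof (rule image_subsetI)
    fix e assume "e \<in> bubbles_preimages (take ?h \<pi>) (drop ?h \<pi>)"
    moreover obtain xs S where e: "e = (xs, S)" by fastforce
    ultimately have b: "bubbles xs S = (take ?h \<pi>, drop ?h \<pi>)" by (simp add: bubbles_preimages_def)
    then have "length xs = p" using length_bubbles(2)[of xs S] assms by simp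
    then show "(\<lambda>(xs, S). xs @ S) e \<in> {w. bubble_output p w = \<pi>}"
      using b e by (simp add: bubble_output_def)
  qed
  show "\<forall>e\<in>bubbles_preimages (take ?h \<pi>) (drop ?h \<pi>).
      (\<lambda>w. (take p w, drop p w)) ((\<lambda>(xs, S). xs @ S) e) = e"
  proof
    fix e assume e: "e \<in> bubbles_preimages (take ?h \<pi>) (drop ?h \<pi>)"
    obtain xs S where xs: "e = (xs, S)" by fastforce
    then have "length xs = p"
      using e length_bubbles(2)[of xs S] assms by (simp add: bubbles_preimages_def)
    then show "(\<lambda>w. (take p w, drop p w)) ((\<lambda>(xs, S). xs @ S) e) = e" using xs by simp
  qed
qed simp

section \<open>Confluence of toppling\<close>

lemma unique_normal_form_if_diamond_on_invariant:
  fixes R :: "'a \<Rightarrow> 'a \<Rightarrow> bool"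
  assumes diamond: "\<And>x y z. I x \<Longrightarrow> R x y \<Longrightarrow> R x z \<Longrightarrow> y = z \<or> (\<exists>u. R y u \<and> R z u)"
    and preserved: "\<And>x y. I x \<Longrightarrow> R x y \<Longrightarrow> I y"
    and "I x" "R\<^sup>*\<^sup>* x y" "R\<^sup>*\<^sup>* x z" "\<And>u. \<not> R y u" "\<And>u. \<not> R z u"
  shows "y = z"
proof -
  define R' where "R' x y \<longleftrightarrow> I x \<and> R x y" for x y
  have "strong_confluentp R'"
  proof
    fix x y z assume "R' x y" "R' x z"
    then have "I x" "R x y" "R x z" "I y" "I z" using preserved by (auto simp: R'_def)
    from diamond[OF this(1-3)] show "\<exists>u. R'\<^sup>*\<^sup>* y u \<and> R'\<^sup>=\<^sup>= z u"
    proof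
      assume "\<exists>u. R y u \<and> R z u"
      then obtain u where "R' y u" "R' z u" using \<open>I y\<close> \<open>I z\<close> by (auto simp: R'_def)
      then show ?thesis by blast
    qed blast
  qed
  then have confluent: "confluentp R'" by (rule strong_confluentp_imp_confluentp)
  have lift: "R'\<^sup>*\<^sup>* a b" if "R\<^sup>*\<^sup>* a b" "I a" for a b
    using that
  proof (induction rule: converse_rtranclp_induct)
    case (step a a')
    then have "R' a a'" "I a'" using preserved by (auto simp: R'_def)
    then show ?case using step.IH by (simp add: converse_rtranclp_into_rtranclp)
  qed simp
  obtain u where u: "R'\<^sup>*\<^sup>* y u" "R'\<^sup>*\<^sup>* z u"
    using confluentpD[OF confluent lift[OF assms(4,3)] lift[OF assms(5,3)]] by blast
  have "y = u" using u(1) assms(6) by (cases rule: converse_rtranclpE) (auto simp: R'_def)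
  moreover have "z = u" using u(2) assms(7) by (cases rule: converse_rtranclpE) (auto simp: R'_def)
  ultimately show ?thesis by simp
qed

definition chips_at :: "nat \<Rightarrow> (nat \<Rightarrow> int) \<Rightarrow> int \<Rightarrow> nat set" where
  "chips_at m c s = {k\<in>{1..m+1}. c k = s}"

definition initial_occupancy :: "nat \<Rightarrow> nat \<Rightarrow> int \<Rightarrow> int" where
  "initial_occupancy m p s = (if s = int p then 2 else if 1 \<le> s \<and> s \<le> int m then 1 else 0)"

text \<open>\<open>d i\<close> is the net number of chips that have crossed from site \<open>i\<close> to site \<open>i - 1\<close>.\<close>
definition admissible_flux :: "nat \<Rightarrow> nat \<Rightarrow> (int \<Rightarrow> int) \<Rightarrow> bool" where
  "admissible_flux m p d \<longleftrightarrow> (\<forall>i.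
     if 1 \<le> i \<and> i \<le> int p then d i \<in> {0, 1}
     else if int p < i \<and> i \<le> int m + 1 then d i \<in> {0, -1} else d i = 0)"

definition toppling_invariant :: "nat \<Rightarrow> nat \<Rightarrow> (nat \<Rightarrow> int) \<Rightarrow> bool" where
  "toppling_invariant m p c \<longleftrightarrow> (\<exists>d. admissible_flux m p d \<and>
     (\<forall>s. int (card (chips_at m c s)) = initial_occupancy m p s - d s + d (s + 1)))"

lemma admissible_flux_bounds:
  assumes "admissible_flux m p d"
  shows "-1 \<le> d i" "d i \<le> 1" "i \<le> int p \<Longrightarrow> 0 \<le> d i" "int p < i \<Longrightarrow> d i \<le> 0"
  using assms[unfolded admissible_flux_def, rule_format, of i] by (auto split: if_splits)

lemma admissible_flux_occupancy_le_2:
  assumes "admissible_flux m p d"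
  shows "initial_occupancy m p s - d s + d (s + 1) \<le> 2"
proof -
  have "initial_occupancy m p s \<le> (if s = int p then 2 else 1)"
    by (simp add: initial_occupancy_def)
  then show ?thesis
    using admissible_flux_bounds[OF assms, of s] admissible_flux_bounds[OF assms, of "s + 1"]
    by (cases "s < int p"; cases "s = int p") auto
qed

lemma card_chips_at_le_2:
  assumes "toppling_invariant m p c"
  shows "card (chips_at m c s) \<le> 2"
  using assms admissible_flux_occupancy_le_2 unfolding toppling_invariant_def
  by (metis of_nat_le_iff of_nat_numeral)

lemma admissible_flux_at_double_site:
  assumes "admissible_flux m p d" "1 \<le> p" "p \<le> m"
    and "2 \<le> initial_occupancy m p i - d i + d (i + 1)"
  shows "1 \<le> i" "i \<le> int m" "d i = (if i \<le> int p then 0 else -1)"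
    "d (i + 1) = (if i < int p then 1 else 0)"
proof -
  note flux = assms(1)[unfolded admissible_flux_def, rule_format]
  have "1 \<le> i \<and> i \<le> int m \<and> d i = (if i \<le> int p then 0 else -1) \<and>
      d (i + 1) = (if i < int p then 1 else 0)"
  proof (cases "i = int p")
    case True
    then show ?thesis
      using flux[of i] flux[of "i + 1"] assms(2-4) by (auto simp: initial_occupancy_def)
  next
    case False
    then show ?thesis using flux[of i] flux[of "i + 1"] assms(2-4)
      by (auto simp: initial_occupancy_def split: if_splits)
  qed
  then show "1 \<le> i" "i \<le> int m" "d i = (if i \<le> int p then 0 else -1)"
    "d (i + 1) = (if i < int p then 1 else 0)" by auto
qed

lemma admissible_flux_topple:
  assumes "admissible_flux m p d" "1 \<le> p" "p \<le> m"
    and "2 \<le> initial_occupancy m p i - d i + d (i + 1)"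
  shows "admissible_flux m p (d(i := d i + 1, i + 1 := d (i + 1) - 1))"
  unfolding admissible_flux_def
proof
  fix j
  show "if 1 \<le> j \<and> j \<le> int p then (d(i := d i + 1, i + 1 := d (i + 1) - 1)) j \<in> {0, 1}
    else if int p < j \<and> j \<le> int m + 1 then (d(i := d i + 1, i + 1 := d (i + 1) - 1)) j \<in> {0, -1}
    else (d(i := d i + 1, i + 1 := d (i + 1) - 1)) j = 0"
    using assms(1)[unfolded admissible_flux_def, rule_format, of j]
      admissible_flux_at_double_site[OF assms]
    by (cases "j = i"; cases "j = i + 1") auto
qed

lemma flux_topple_occupancy:
  "initial_occupancy m p s - (d(i := d i + 1, i + 1 := d (i + 1) - 1)) s
     + (d(i := d i + 1, i + 1 := d (i + 1) - 1)) (s + 1) =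
   initial_occupancy m p s - d s + d (s + 1)
     + (if s = i - 1 then 1 else 0) + (if s = i + 1 then 1 else 0) - (if s = i then 2 else 0)"
  by auto

lemma card_chips_at_topple:
  assumes "c \<alpha> = i" "c \<beta> = i" "\<alpha> \<noteq> \<beta>" "\<alpha> \<in> {1..m+1}" "\<beta> \<in> {1..m+1}"
  shows "int (card (chips_at m (c(\<alpha> := i - 1, \<beta> := i + 1)) s)) = int (card (chips_at m c s))
    + (if s = i - 1 then 1 else 0) + (if s = i + 1 then 1 else 0) - (if s = i then 2 else 0)"
proof -
  let ?K = "chips_at m c s" and ?K' = "chips_at m (c(\<alpha> := i - 1, \<beta> := i + 1)) s"
  have fin: "finite ?K" by (simp add: chips_at_def)
  consider "s = i - 1" | "s = i + 1" | "s = i" | "s \<notin> {i - 1, i, i + 1}" by blast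
  then show ?thesis
  proof cases
    case 1
    then have "?K' = insert \<alpha> ?K" "\<alpha> \<notin> ?K" using assms by (auto simp: chips_at_def)
    then show ?thesis using 1 fin by simp
  next
    case 2
    then have "?K' = insert \<beta> ?K" "\<beta> \<notin> ?K" using assms by (auto simp: chips_at_def)
    then show ?thesis using 2 fin by simp
  next
    case 3
    then have "?K' = ?K - {\<alpha>, \<beta>}" "{\<alpha>, \<beta>} \<subseteq> ?K" using assms by (auto simp: chips_at_def)
    moreover have "card {\<alpha>, \<beta>} = 2" using assms(3) by simp
    moreover have "card {\<alpha>, \<beta>} \<le> card ?K" using \<open>{\<alpha>, \<beta>} \<subseteq> ?K\<close> fin by (rule card_mono[rotated])
    ultimately have "card ?K' + 2 = card ?K"
      using card_Diff_subset[OF _ \<open>{\<alpha>, \<beta>} \<subseteq> ?K\<close>] by simp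
    then show ?thesis using 3 by simp
  next
    case 4
    then have "?K' = ?K" using assms by (auto simp: chips_at_def)
    then show ?thesis using 4 by simp
  qed
qed

lemma toppling_invariant_step:
  assumes "toppling_invariant m p c" "topple_step m c c'" "1 \<le> p" "p \<le> m"
  shows "toppling_invariant m p c'"
proof -
  obtain \<alpha> \<beta> where \<alpha>\<beta>: "1 \<le> \<alpha>" "\<alpha> < \<beta>" "\<beta> \<le> m + 1" "c \<alpha> = c \<beta>"
    and c': "c' = c(\<alpha> := c \<alpha> - 1, \<beta> := c \<beta> + 1)"
    using assms(2) unfolding topple_step_def by blast
  define i where "i = c \<alpha>"
  obtain d where flux: "admissible_flux m p d"
    and occ: "\<forall>s. int (card (chips_at m c s)) = initial_occupancy m p s - d s + d (s + 1)"
    using assms(1) unfolding toppling_invariant_def by blast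
  have "{\<alpha>, \<beta>} \<subseteq> chips_at m c i" using \<alpha>\<beta> by (auto simp: chips_at_def i_def)
  then have "2 \<le> card (chips_at m c i)"
    using \<alpha>\<beta>(2) card_mono[of "chips_at m c i" "{\<alpha>, \<beta>}"] by (simp add: chips_at_def)
  then have "2 \<le> initial_occupancy m p i - d i + d (i + 1)" using occ[rule_format, of i] by linarith
  then have "admissible_flux m p (d(i := d i + 1, i + 1 := d (i + 1) - 1))"
    using admissible_flux_topple[OF flux assms(3,4)] by blast
  moreover have "int (card (chips_at m c' s)) =
      initial_occupancy m p s - (d(i := d i + 1, i + 1 := d (i + 1) - 1)) s
        + (d(i := d i + 1, i + 1 := d (i + 1) - 1)) (s + 1)" for s
  proof -
    have "c' = c(\<alpha> := i - 1, \<beta> := i + 1)" using c' \<alpha>\<beta>(4) by (simp add: i_def)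
    moreover have "c \<alpha> = i" "c \<beta> = i" "\<alpha> \<noteq> \<beta>" "\<alpha> \<in> {1..m+1}" "\<beta> \<in> {1..m+1}"
      using \<alpha>\<beta> by (auto simp: i_def)
    ultimately show ?thesis
      unfolding flux_topple_occupancy using card_chips_at_topple occ by simp
  qed
  ultimately show ?thesis unfolding toppling_invariant_def by blast
qed

lemma toppling_invariant_initial:
  assumes "c \<in> confS m p" "1 \<le> p" "p \<le> m"
  shows "toppling_invariant m p c"
proof -
  have "int (card (chips_at m c s)) = initial_occupancy m p s" for s
  proof (cases "1 \<le> s \<and> s \<le> int m")
    case True
    then show ?thesis
      using assms by (cases "s = int p") (auto simp: confS_def chips_at_def initial_occupancy_def)
  next
    case False
    then have "chips_at m c s = {}" using assms(1) by (fastforce simp: confS_def chips_at_def)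
    then show ?thesis using False assms(2,3) by (auto simp: initial_occupancy_def)
  qed
  moreover have "admissible_flux m p (\<lambda>_. 0)" by (simp add: admissible_flux_def)
  ultimately show ?thesis unfolding toppling_invariant_def by (intro exI[of _ "\<lambda>_. 0"]) simp
qed

lemma topple_step_diamond:
  assumes "toppling_invariant m p c" "topple_step m c c1" "topple_step m c c2"
  shows "c1 = c2 \<or> (\<exists>u. topple_step m c1 u \<and> topple_step m c2 u)"
proof -
  obtain \<alpha> \<beta> where \<alpha>\<beta>: "1 \<le> \<alpha>" "\<alpha> < \<beta>" "\<beta> \<le> m + 1" "c \<alpha> = c \<beta>"
    and c1: "c1 = c(\<alpha> := c \<alpha> - 1, \<beta> := c \<beta> + 1)"
    using assms(2) unfolding topple_step_def by blast
  obtain \<gamma> \<delta> where \<gamma>\<delta>: "1 \<le> \<gamma>" "\<gamma> < \<delta>" "\<delta> \<le> m + 1" "c \<gamma> = c \<delta>"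
    and c2: "c2 = c(\<gamma> := c \<gamma> - 1, \<delta> := c \<delta> + 1)"
    using assms(3) unfolding topple_step_def by blast
  show ?thesis
  proof (cases "c \<alpha> = c \<gamma>")
    case True
    have "{\<alpha>, \<beta>, \<gamma>, \<delta>} \<subseteq> chips_at m c (c \<alpha>)" using \<alpha>\<beta> \<gamma>\<delta> True by (auto simp: chips_at_def)
    moreover have "finite (chips_at m c (c \<alpha>))" by (simp add: chips_at_def)
    ultimately have le2: "card {\<alpha>, \<beta>, \<gamma>, \<delta>} \<le> 2"
      using card_chips_at_le_2[OF assms(1)] by (meson card_mono order_trans)
    have "x \<in> {\<alpha>, \<beta>}" if "x \<in> {\<gamma>, \<delta>}" for x
    proof (rule ccontr)
      assume "x \<notin> {\<alpha>, \<beta>}"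
      then have "card {\<alpha>, \<beta>, x} = 3" using \<alpha>\<beta>(2) by simp
      moreover have "card {\<alpha>, \<beta>, x} \<le> card {\<alpha>, \<beta>, \<gamma>, \<delta>}" using that by (intro card_mono) auto
      ultimately show False using le2 by simp
    qed
    then have "\<gamma> \<in> {\<alpha>, \<beta>}" "\<delta> \<in> {\<alpha>, \<beta>}" by simp_all
    then have "\<gamma> = \<alpha> \<and> \<delta> = \<beta>" using \<alpha>\<beta>(2) \<gamma>\<delta>(2) by auto
    then show ?thesis using c1 c2 by simp
  next
    case False
    then have distinct: "\<gamma> \<noteq> \<alpha>" "\<gamma> \<noteq> \<beta>" "\<delta> \<noteq> \<alpha>" "\<delta> \<noteq> \<beta>" using \<alpha>\<beta>(4) \<gamma>\<delta>(4) by auto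
    define u where "u = c(\<alpha> := c \<alpha> - 1, \<beta> := c \<beta> + 1, \<gamma> := c \<gamma> - 1, \<delta> := c \<delta> + 1)"
    have "u = c1(\<gamma> := c1 \<gamma> - 1, \<delta> := c1 \<delta> + 1)" "c1 \<gamma> = c1 \<delta>"
      using distinct \<gamma>\<delta>(4) by (auto simp: u_def c1 fun_eq_iff)
    then have "topple_step m c1 u" unfolding topple_step_def using \<gamma>\<delta>(1-3) by blast
    moreover have "u = c2(\<alpha> := c2 \<alpha> - 1, \<beta> := c2 \<beta> + 1)" "c2 \<alpha> = c2 \<beta>"
      using distinct \<alpha>\<beta>(2,4) by (auto simp: u_def c2 fun_eq_iff)
    then have "topple_step m c2 u" unfolding topple_step_def using \<alpha>\<beta>(1-3) by blast
    ultimately show ?thesis by blast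
  qed
qed

lemma stable_conf_no_topple_step: "stable_conf m c \<Longrightarrow> \<not> topple_step m c c'"
  unfolding stable_conf_def topple_step_def inj_on_def by fastforce

theorem stable_toppling_result_unique:
  assumes "c \<in> confS m p" "1 \<le> p" "p \<le> m"
    and "(topple_step m)\<^sup>*\<^sup>* c c1" "stable_conf m c1" "(topple_step m)\<^sup>*\<^sup>* c c2" "stable_conf m c2"
  shows "c1 = c2"
proof (rule unique_normal_form_if_diamond_on_invariant[where I = "toppling_invariant m p"])
  show "toppling_invariant m p c" using assms(1-3) by (rule toppling_invariant_initial)
  show "\<not> topple_step m c1 u" "\<not> topple_step m c2 u" for u
    using assms(5,7) by (simp_all add: stable_conf_no_topple_step)
qed (use assms topple_step_diamond toppling_invariant_step in auto)

section \<open>Toppling waves\<close>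

text \<open>The topplings started at a doubled site travel to the right as a wave: at every site the
  smaller chip falls back one site and the larger one moves on, as in a pass of bubble sort.\<close>
lemma topple_wave:
  assumes "distinct (z # ys)" "set (z # ys) \<subseteq> {1..m+1}" "c z = s"
    "\<forall>i<length ys. c (ys ! i) = s + int i"
  shows "\<exists>c'. (topple_step m)\<^sup>*\<^sup>* c c' \<and> (\<forall>x. x \<notin> set (z # ys) \<longrightarrow> c' x = c x) \<and>
     c' (snd (bubble z ys)) = s + int (length ys) \<and>
     (\<forall>i<length ys. c' (fst (bubble z ys) ! i) = s + int i - 1)"
  using assms
proof (induction ys arbitrary: z c s)
  case (Cons y ys)
  define \<alpha> \<beta> where "\<alpha> = min z y" and "\<beta> = max z y"
  have \<alpha>\<beta>: "\<alpha> < \<beta>" "{\<alpha>, \<beta>} = {z, y}" "1 \<le> \<alpha>" "\<beta> \<le> m + 1"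
    using Cons.prems(1,2) by (auto simp: \<alpha>_def \<beta>_def min_def max_def)
  have "c y = s" using Cons.prems(4) by (auto dest: spec[of _ 0])
  then have "c \<alpha> = s" "c \<beta> = s" using Cons.prems(3) by (auto simp: \<alpha>_def \<beta>_def min_def max_def)
  define c1 where "c1 = c(\<alpha> := s - 1, \<beta> := s + 1)"
  have step: "topple_step m c c1"
    unfolding topple_step_def c1_def using \<alpha>\<beta> \<open>c \<alpha> = s\<close> \<open>c \<beta> = s\<close>
    by (intro exI[of _ \<alpha>] exI[of _ \<beta>]) auto
  have ys_fresh: "x \<notin> {\<alpha>, \<beta>}" if "x \<in> set ys" for x
    using Cons.prems(1) that \<alpha>\<beta>(2) by auto
  have c1_ys: "\<forall>i<length ys. c1 (ys ! i) = (s + 1) + int i"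
  proof (intro allI impI)
    fix i assume i: "i < length ys"
    then have "c1 (ys ! i) = c (ys ! i)" using ys_fresh[of "ys ! i"] by (simp add: c1_def)
    then show "c1 (ys ! i) = (s + 1) + int i"
      using Cons.prems(4) i by (auto dest: spec[of _ "Suc i"])
  qed
  have "distinct (\<beta> # ys)" "set (\<beta> # ys) \<subseteq> {1..m+1}" "c1 \<beta> = s + 1"
    using Cons.prems(1,2) \<alpha>\<beta>(2) ys_fresh by (auto simp: c1_def \<beta>_def max_def)
  from Cons.IH[OF this c1_ys] obtain c' where c': "(topple_step m)\<^sup>*\<^sup>* c1 c'"
    "\<forall>x. x \<notin> set (\<beta> # ys) \<longrightarrow> c' x = c1 x" "c' (snd (bubble \<beta> ys)) = (s + 1) + int (length ys)"
    "\<forall>i<length ys. c' (fst (bubble \<beta> ys) ! i) = s + 1 + int i - 1"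
    by blast
  have bubble: "bubble z (y # ys) = (\<alpha> # fst (bubble \<beta> ys), snd (bubble \<beta> ys))"
    by (simp add: \<alpha>_def \<beta>_def split_beta)
  have "\<alpha> \<notin> set (\<beta> # ys)" using \<alpha>\<beta>(1) ys_fresh by auto
  then have "c' \<alpha> = s - 1" using c'(2) by (simp add: c1_def)
  show ?case
  proof (intro exI conjI allI impI)
    show "(topple_step m)\<^sup>*\<^sup>* c c'" using step c'(1) by (rule converse_rtranclp_into_rtranclp)
    show "c' x = c x" if "x \<notin> set (z # y # ys)" for x
    proof -
      from that have "x \<notin> set (\<beta> # ys)" "x \<noteq> \<alpha>" by (auto simp: \<alpha>_def \<beta>_def min_def max_def)
      then show ?thesis using c'(2) by (auto simp: c1_def)
    qed
    show "c' (snd (bubble z (y # ys))) = s + int (length (y # ys))"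
      using c'(3) unfolding bubble by simp
    show "c' (fst (bubble z (y # ys)) ! i) = s + int i - 1"
      if "i < length (y # ys)" for i
      using that c'(4) \<open>c' \<alpha> = s - 1\<close> unfolding bubble by (cases i) auto
  qed
qed auto

text \<open>\<open>word_conf h q w\<close> puts the letter \<open>w ! i\<close> on site \<open>i + 1\<close>, except that the block
  \<open>w ! q, \<dots>, w ! (q + h - 1)\<close> is shifted one site to the left: site \<open>q\<close> carries both
  \<open>w ! (q - 1)\<close> and \<open>w ! q\<close>, and site \<open>q + h\<close> is empty.\<close>
definition word_site :: "nat \<Rightarrow> nat \<Rightarrow> nat \<Rightarrow> nat" where
  "word_site h q i = (if q \<le> i \<and> i < q + h then i else i + 1)"

definition word_conf :: "nat \<Rightarrow> nat \<Rightarrow> nat list \<Rightarrow> nat \<Rightarrow> int" where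
  "word_conf h q w k =
    (if k \<in> set w then int (word_site h q (THE i. i < length w \<and> w ! i = k)) else undefined)"

lemma word_conf_nth: "distinct w \<Longrightarrow> i < length w \<Longrightarrow> word_conf h q w (w ! i) = int (word_site h q i)"
  unfolding word_conf_def
  by (auto intro!: arg_cong[where f = "word_site h q"] simp: nth_eq_iff_index_eq)

lemma word_conf_eqI:
  assumes "distinct w" "\<And>i. i < length w \<Longrightarrow> c (w ! i) = int (word_site h q i)"
    "\<And>k. k \<notin> set w \<Longrightarrow> c k = undefined"
  shows "word_conf h q w = c"
proof
  fix k show "word_conf h q w k = c k"
  proof (cases "k \<in> set w")
    case True
    then obtain i where "i < length w" "k = w ! i" by (auto simp: in_set_conv_nth)
    then show ?thesis using word_conf_nth[OF assms(1)] assms(2) by simp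
  qed (simp add: word_conf_def assms(3))
qed

definition wave_word :: "nat \<Rightarrow> nat \<Rightarrow> nat list \<Rightarrow> nat list" where
  "wave_word h q w =
    (let (r, M) = bubble (w ! (q - 1)) (take h (drop q w))
     in take (q - 1) w @ r @ M # drop (q + h) w)"

lemma nth_append_outside_middle:
  "j < length A \<or> length A + length C \<le> j \<Longrightarrow>
    (A @ C @ B) ! j = (if j < length A then A ! j else B ! (j - length A - length C))"
  by (auto simp: nth_append)

lemma word_conf_after_wave:
  assumes "distinct (A @ z # ys @ B)" "length A = q - 1" "1 \<le> q"
    and "mset (r @ [M]) = mset (z # ys)"
    and "\<forall>x. x \<notin> set (z # ys) \<longrightarrow> c' x = word_conf (length ys) q (A @ z # ys @ B) x"
    and "c' M = int (q + length ys)" "\<forall>i<length ys. c' (r ! i) = int (q + i) - 1"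
  shows "word_conf (length ys) (q - 1) (A @ r @ M # B) = c'"
proof -
  let ?h = "length ys" and ?w = "A @ z # ys @ B" and ?w' = "A @ r @ M # B"
  have "length r = ?h" using arg_cong[OF assms(4), of size] by simp
  have "mset ?w' = mset ?w" using assms(4) by simp
  then have distinct: "distinct ?w'" and "set ?w' = set ?w"
    using assms(1) mset_eq_imp_distinct_iff mset_eq_setD by blast+
  show ?thesis
  proof (rule word_conf_eqI[OF distinct])
    fix j assume j: "j < length ?w'"
    consider "j < q - 1 \<or> q + ?h \<le> j" | "q - 1 \<le> j" "j < q - 1 + ?h" | "j = q - 1 + ?h"
      using assms(3) by linarith
    then show "c' (?w' ! j) = int (word_site ?h (q - 1) j)"
    proof cases
      case 1
      then have "?w' ! j = ?w ! j" "?w ! j \<notin> set (z # ys)"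
        using nth_append_outside_middle[of j A "r @ [M]" B]
          nth_append_outside_middle[of j A "z # ys" B]
          assms(1-3) j \<open>length r = ?h\<close> by (auto dest: nth_mem simp: disjoint_iff)
      then show ?thesis
        using 1 j assms(2,3,5) word_conf_nth[OF assms(1), of j] \<open>length r = ?h\<close>
        by (auto simp: word_site_def)
    next
      case 2
      then have "?w' ! j = r ! (j - (q - 1))" "j - (q - 1) < ?h"
        using assms(2) \<open>length r = ?h\<close> by (auto simp: nth_append)
      then show ?thesis using 2 assms(3,7) by (simp add: word_site_def)
    next
      case 3
      then have "j = length A + length r" using assms(2,3) \<open>length r = ?h\<close> by simp
      then have "?w' ! j = M" by (simp only: nth_append_length_plus nth_append_length)
      then show ?thesis using 3 assms(3,6) by (simp add: word_site_def)
    qed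
  next
    fix k assume "k \<notin> set ?w'"
    then have "k \<notin> set ?w" using \<open>set ?w' = set ?w\<close> by blast
    then have "c' k = word_conf ?h q ?w k" using assms(5) by simp
    also have "\<dots> = undefined" using \<open>k \<notin> set ?w\<close> by (simp only: word_conf_def if_False)
    finally show "c' k = undefined" .
  qed
qed

lemma word_conf_wave:
  assumes "1 \<le> q" "q + h \<le> length w" "distinct w" "set w \<subseteq> {1..m+1}"
  shows "(topple_step m)\<^sup>*\<^sup>* (word_conf h q w) (word_conf h (q - 1) (wave_word h q w))"
proof -
  define A z ys B where "A = take (q - 1) w" and "z = w ! (q - 1)"
    and "ys = take h (drop q w)" and "B = drop (q + h) w"
  obtain r M where rM: "bubble z ys = (r, M)" by fastforce
  have "drop (q - 1) w = z # drop q w"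
    using assms(1,2) Cons_nth_drop_Suc[of "q - 1" w] by (simp add: z_def)
  then have w: "w = A @ z # ys @ B"
    unfolding A_def ys_def B_def using assms(1) by (metis add.commute append_take_drop_id drop_drop)
  have lengths: "length A = q - 1" "length ys = h"
    using assms(1,2) by (auto simp: A_def ys_def)
  let ?c = "word_conf h q w"
  have "word_site h q (q - 1) = q" using assms(1) by (auto simp: word_site_def)
  then have "?c z = int q"
    using word_conf_nth[OF assms(3), of "q - 1"] assms(1,2) by (simp add: z_def)
  moreover have "\<forall>i<length ys. ?c (ys ! i) = int q + int i"
  proof (intro allI impI)
    fix i assume i: "i < length ys"
    have "ys ! i = w ! (q + i)" "q + i < length w"
      using w lengths assms(1) i by (auto simp: nth_append)
    moreover have "word_site h q (q + i) = q + i" using i lengths by (simp add: word_site_def)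
    ultimately show "?c (ys ! i) = int q + int i" using word_conf_nth[OF assms(3)] by simp
  qed
  moreover have "distinct (z # ys)" "set (z # ys) \<subseteq> {1..m+1}" using assms(3,4) w by auto
  ultimately obtain c' where c': "(topple_step m)\<^sup>*\<^sup>* ?c c'"
    "\<forall>x. x \<notin> set (z # ys) \<longrightarrow> c' x = ?c x"
    "c' M = int (q + h)" "\<forall>i<h. c' (r ! i) = int (q + i) - 1"
    using topple_wave[of z ys m ?c "int q"] rM lengths by auto
  have "word_conf h (q - 1) (A @ r @ M # B) = c'"
    using word_conf_after_wave[of A z ys B q r M c'] assms(1,3) w lengths bubble_eqD(2)[OF rM]
      c'(2-4)
    by simp
  moreover have "wave_word h q w = A @ r @ M # B"
    using rM by (simp add: wave_word_def A_def z_def ys_def B_def)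
  ultimately show ?thesis using c'(1) by simp
qed

definition wave_stage :: "nat \<Rightarrow> nat list \<Rightarrow> nat \<Rightarrow> nat list" where
  "wave_stage p w q = take q w @ (let (\<sigma>, \<tau>) = bubbles (drop q (take p w)) (drop p w) in \<sigma> @ \<tau>)"

lemma wave_stage_start: "p \<le> length w \<Longrightarrow> wave_stage p w p = w"
  by (simp add: wave_stage_def)

lemma wave_stage_0: "wave_stage p w 0 = bubble_output p w"
  by (simp add: wave_stage_def bubble_output_def)

lemma mset_wave_stage:
  assumes "q \<le> p"
  shows "mset (wave_stage p w q) = mset w"
proof -
  have "mset (wave_stage p w q) = mset (take q w) + (mset (drop q (take p w)) + mset (drop p w))"
    using mset_bubbles[of "drop q (take p w)" "drop p w"] by (simp add: wave_stage_def split_beta)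
  also have "\<dots> = mset ((take q (take p w) @ drop q (take p w)) @ drop p w)"
    using assms by (simp add: min_absorb1)
  also have "\<dots> = mset w" by (simp only: append_take_drop_id)
  finally show ?thesis .
qed

lemma wave_word_wave_stage:
  assumes "1 \<le> q" "q \<le> p" "length w = p + h"
  shows "wave_word h q (wave_stage p w q) = wave_stage p w (q - 1)"
proof -
  define xs S where "xs = take p w" and "S = drop p w"
  obtain \<sigma> \<tau> where b: "bubbles (drop q xs) S = (\<sigma>, \<tau>)" by fastforce
  have lengths: "length xs = p" "length \<sigma> = h"
    using assms length_bubbles(1)[of "drop q xs" S] b by (auto simp: xs_def S_def)
  have stage: "wave_stage p w q = take q xs @ \<sigma> @ \<tau>"
    using assms(2) b by (simp add: wave_stage_def xs_def S_def min_absorb1)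
  have "drop (q - 1) xs = xs ! (q - 1) # drop q xs"
    using assms lengths Cons_nth_drop_Suc[of "q - 1" xs] by simp
  then have "wave_stage p w (q - 1) =
      take (q - 1) xs @ (let (r, M) = bubble (xs ! (q - 1)) \<sigma> in r @ M # \<tau>)"
    using assms(1,2) b by (simp add: wave_stage_def xs_def S_def split_beta min_absorb1)
  moreover have "take (q - 1) (take q xs @ \<sigma> @ \<tau>) = take (q - 1) xs"
    "(take q xs @ \<sigma> @ \<tau>) ! (q - 1) = xs ! (q - 1)"
    "take h (drop q (take q xs @ \<sigma> @ \<tau>)) = \<sigma>" "drop (q + h) (take q xs @ \<sigma> @ \<tau>) = \<tau>"
    using assms(1,2) lengths by (auto simp: nth_append)
  ultimately show ?thesis unfolding stage wave_word_def by (simp add: split_beta)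
qed

lemma word_conf_topples_to_output:
  assumes "length w = p + h" "distinct w" "set w \<subseteq> {1..m+1}"
  shows "(topple_step m)\<^sup>*\<^sup>* (word_conf h p w) (word_conf h 0 (bubble_output p w))"
proof -
  have "(topple_step m)\<^sup>*\<^sup>* (word_conf h q (wave_stage p w q)) (word_conf h 0 (bubble_output p w))"
    if "q \<le> p" for q
    using that
  proof (induction q)
    case 0
    then show ?case by (simp add: wave_stage_0)
  next
    case (Suc q)
    let ?w = "wave_stage p w (Suc q)"
    have mset: "mset ?w = mset w" using Suc.prems by (rule mset_wave_stage)
    have "length ?w = p + h" using mset_eq_length[OF mset] assms(1) by simp
    moreover have "distinct ?w" using mset_eq_imp_distinct_iff[OF mset] assms(2) by simp
    moreover have "set ?w \<subseteq> {1..m+1}" using mset_eq_setD[OF mset] assms(3) by simp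
    ultimately
    have "(topple_step m)\<^sup>*\<^sup>* (word_conf h (Suc q) ?w) (word_conf h q (wave_word h (Suc q) ?w))"
      using Suc.prems by (intro word_conf_wave[of "Suc q" h ?w m, simplified]) auto
    also have "wave_word h (Suc q) ?w = wave_stage p w q"
      using wave_word_wave_stage[OF _ Suc.prems assms(1)] by simp
    finally show ?case using Suc.IH Suc.prems by simp
  qed
  from this[of p] show ?thesis using wave_stage_start[of p w] assms(1) by simp
qed

lemma strict_mono_word_site_0: "strict_mono (word_site h 0)"
  by (rule strict_monoI) (auto simp: word_site_def)

lemma stable_word_conf_0:
  assumes "distinct w" "set w = {1..m+1}"
  shows "stable_conf m (word_conf h 0 w)"
  unfolding stable_conf_def
proof (rule inj_onI)
  fix x y assume "x \<in> {1..m+1}" "y \<in> {1..m+1}" and eq: "word_conf h 0 w x = word_conf h 0 w y"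
  then obtain i j where "i < length w" "x = w ! i" "j < length w" "y = w ! j"
    using assms(2) by (metis in_set_conv_nth)
  then show "x = y"
    using eq word_conf_nth[OF assms(1)] strict_mono_eq[OF strict_mono_word_site_0] by simp
qed

lemma reading_word_conf_0:
  assumes "distinct w" "set w = {1..m+1}"
  shows "reading m (word_conf h 0 w) w"
  unfolding reading_def sorted_wrt_iff_nth_less
  using assms word_conf_nth[OF assms(1)] strict_mono_less[OF strict_mono_word_site_0] by simp

lemma reading_unique: "reading m c \<pi> \<Longrightarrow> reading m c \<pi>' \<Longrightarrow> \<pi> = \<pi>'"
proof -
  assume "reading m c \<pi>" "reading m c \<pi>'"
  then have sorted: "sorted_wrt (<) (map c \<pi>)" "sorted_wrt (<) (map c \<pi>')" and "set \<pi> = set \<pi>'"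
    unfolding reading_def by (auto simp: sorted_wrt_map)
  then have "map c \<pi> = map c \<pi>'"
    by (intro sorted_distinct_set_unique) (auto simp: strict_sorted_iff)
  moreover have "inj_on c (set \<pi> \<union> set \<pi>')"
    using sorted \<open>set \<pi> = set \<pi>'\<close> by (auto simp: strict_sorted_iff distinct_map)
  ultimately show ?thesis using inj_on_map_eq_map by blast
qed

section \<open>Configurations as words\<close>

lemma chips_at_word_conf:
  assumes "distinct w" "set w = {1..m+1}"
  shows "chips_at m (word_conf h q w) s = (\<lambda>i. w ! i) ` {i. i < m + 1 \<and> int (word_site h q i) = s}"
proof (intro equalityI subsetI)
  fix k assume k: "k \<in> chips_at m (word_conf h q w) s"
  then have "k \<in> set w" using assms(2) by (simp add: chips_at_def)
  then obtain i where "i < length w" "k = w ! i" by (auto simp: in_set_conv_nth)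
  moreover have "length w = m + 1" using assms distinct_card by fastforce
  ultimately show "k \<in> (\<lambda>i. w ! i) ` {i. i < m + 1 \<and> int (word_site h q i) = s}"
    using k word_conf_nth[OF assms(1)] by (auto simp: chips_at_def)
next
  fix k assume "k \<in> (\<lambda>i. w ! i) ` {i. i < m + 1 \<and> int (word_site h q i) = s}"
  then obtain i where "i < m + 1" "int (word_site h q i) = s" "k = w ! i" by blast
  moreover have "length w = m + 1" using assms distinct_card by fastforce
  ultimately show "k \<in> chips_at m (word_conf h q w) s"
    using word_conf_nth[OF assms(1)] nth_mem[of i w] assms(2) by (auto simp: chips_at_def)
qed

definition conf_words :: "nat \<Rightarrow> nat \<Rightarrow> nat list set" where
  "conf_words m p = {w. distinct w \<and> set w = {1..m+1} \<and> w ! (p - 1) < w ! p}"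

definition conf_word :: "nat \<Rightarrow> nat \<Rightarrow> (nat \<Rightarrow> int) \<Rightarrow> nat list" where
  "conf_word m p c =
    map (\<lambda>i. (if i = p then Max else Min) (chips_at m c (int (word_site (m + 1 - p) p i))))
      [0..<m+1]"

context
  fixes m p :: nat
  assumes p: "1 \<le> p" "p \<le> m"
begin

lemma word_site_range: "i < m + 1 \<Longrightarrow> word_site (m + 1 - p) p i \<in> {1..m}"
  using p by (auto simp: word_site_def)

lemma positions_at_site:
  assumes "s \<in> {1..m}"
  shows "{i. i < m + 1 \<and> int (word_site (m + 1 - p) p i) = int s} =
    (if s = p then {p - 1, p} else if s < p then {s - 1} else {s})"
  using p assms by (auto simp: word_site_def)

lemma word_site_eq_iff:
  assumes "i < m + 1" "j < m + 1"
  shows "word_site (m + 1 - p) p i = word_site (m + 1 - p) p j \<longleftrightarrow> i = j \<or> {i, j} = {p - 1, p}"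
  using p assms by (auto simp: word_site_def doubleton_eq_iff)

lemma word_conf_in_confS:
  assumes "distinct w" "set w = {1..m+1}"
  shows "word_conf (m + 1 - p) p w \<in> confS m p"
proof -
  let ?c = "word_conf (m + 1 - p) p w"
  have len: "length w = m + 1" using assms distinct_card by fastforce
  have card: "card (chips_at m ?c (int s)) = (if s = p then 2 else 1)" if "s \<in> {1..m}" for s
  proof -
    have "inj_on (\<lambda>i. w ! i) {i. i < m + 1}"
      using assms(1) len by (simp add: inj_on_def nth_eq_iff_index_eq)
    then have "card (chips_at m ?c (int s)) =
        card {i. i < m + 1 \<and> int (word_site (m + 1 - p) p i) = int s}"
      unfolding chips_at_word_conf[OF assms] by (intro card_image) (auto intro: inj_on_subset)
    then show ?thesis using positions_at_site[OF that] p by auto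
  qed
  have "?c \<in> {1..m+1} \<rightarrow>\<^sub>E UNIV" by (auto simp: word_conf_def assms(2) PiE_def extensional_def)
  moreover have "?c k \<in> {1..int m}" if "k \<in> {1..m+1}" for k
  proof -
    have "k \<in> set w" using that assms(2) by simp
    then obtain i where "i < m + 1" "k = w ! i" using len by (auto simp: in_set_conv_nth)
    then show ?thesis using word_conf_nth[OF assms(1)] word_site_range len by force
  qed
  moreover have "card (chips_at m ?c s) = 1" if "s \<in> {1..int m} - {int p}" for s
  proof -
    from that have "nat s \<in> {1..m}" "nat s \<noteq> p" "int (nat s) = s" by auto
    then show ?thesis using card[of "nat s"] by simp
  qed
  moreover have "card (chips_at m ?c (int p)) = 2" using card[of p] p by simp
  ultimately show ?thesis unfolding confS_def chips_at_def by blast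
qed

lemma chips_at_confS:
  assumes "c \<in> confS m p" "s \<in> {1..m}"
  shows "finite (chips_at m c (int s))" "card (chips_at m c (int s)) = (if s = p then 2 else 1)"
  using assms by (auto simp: confS_def chips_at_def)

lemma Min_less_Max_chips_at_doubled_site:
  assumes "c \<in> confS m p"
  shows "Min (chips_at m c (int p)) < Max (chips_at m c (int p))"
proof -
  obtain a b where "chips_at m c (int p) = {a, b}" "a \<noteq> b"
    using chips_at_confS[OF assms, of p] p by (auto simp: card_2_iff)
  then show ?thesis by (simp add: min_def max_def)
qed

lemma length_conf_word: "length (conf_word m p c) = m + 1"
  by (simp add: conf_word_def)

lemma nth_conf_word:
  "i < m + 1 \<Longrightarrow>
    conf_word m p c ! i =
      (if i = p then Max else Min) (chips_at m c (int (word_site (m + 1 - p) p i)))"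
  by (simp add: conf_word_def del: upt_Suc)

lemma conf_word_nth_in_chips_at:
  assumes "c \<in> confS m p" "i < m + 1"
  shows "conf_word m p c ! i \<in> chips_at m c (int (word_site (m + 1 - p) p i))"
proof -
  let ?K = "chips_at m c (int (word_site (m + 1 - p) p i))"
  have "finite ?K" "?K \<noteq> {}"
    using chips_at_confS[OF assms(1) word_site_range[OF assms(2)]] by (auto split: if_splits)
  then show ?thesis using nth_conf_word[OF assms(2), of c] by (cases "i = p") simp_all
qed

lemma conf_word_in_conf_words:
  assumes "c \<in> confS m p"
  shows "conf_word m p c \<in> conf_words m p"
proof -
  let ?w = "conf_word m p c"
  have len: "length ?w = m + 1" by (rule length_conf_word)
  have site: "c (?w ! i) = int (word_site (m + 1 - p) p i)" "?w ! i \<in> {1..m+1}" if "i < m + 1" for i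
    using conf_word_nth_in_chips_at[OF assms that] by (auto simp: chips_at_def)
  have ordered: "?w ! (p - 1) < ?w ! p"
  proof -
    have "word_site (m + 1 - p) p (p - 1) = p" using p by (auto simp: word_site_def)
    moreover have "p - 1 \<noteq> p" "p - 1 < m + 1" using p by auto
    ultimately have "?w ! (p - 1) = Min (chips_at m c (int p))"
      using nth_conf_word[of "p - 1" c] by simp
    moreover have "?w ! p = Max (chips_at m c (int p))"
      using nth_conf_word[of p c] p by (simp add: word_site_def)
    ultimately show ?thesis using Min_less_Max_chips_at_doubled_site[OF assms] by simp
  qed
  have "distinct ?w"
    unfolding distinct_conv_nth
  proof (intro allI impI notI)
    fix i j assume ij: "i < length ?w" "j < length ?w" "i \<noteq> j" and eq: "?w ! i = ?w ! j"
    then have "word_site (m + 1 - p) p i = word_site (m + 1 - p) p j"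
      using site len by (metis of_nat_eq_iff)
    then have "{i, j} = {p - 1, p}" using ij len word_site_eq_iff by simp
    then show False using eq ordered by (auto simp: doubleton_eq_iff)
  qed
  moreover have "set ?w = {1..m+1}"
  proof (rule card_subset_eq)
    show "set ?w \<subseteq> {1..m+1}" using site(2) len by (auto simp: in_set_conv_nth)
    show "card (set ?w) = card {1..m+1}" using distinct_card[OF \<open>distinct ?w\<close>] len by simp
  qed simp
  ultimately show ?thesis using ordered by (simp add: conf_words_def)
qed

lemma word_conf_conf_word:
  assumes "c \<in> confS m p"
  shows "word_conf (m + 1 - p) p (conf_word m p c) = c"
proof (rule word_conf_eqI)
  have "conf_word m p c \<in> conf_words m p" using assms by (rule conf_word_in_conf_words)
  then show "distinct (conf_word m p c)" and "k \<notin> set (conf_word m p c) \<Longrightarrow> c k = undefined" for k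
    using assms by (auto simp: conf_words_def confS_def PiE_def extensional_def)
  show "c (conf_word m p c ! i) = int (word_site (m + 1 - p) p i)"
    if "i < length (conf_word m p c)" for i
    using conf_word_nth_in_chips_at[OF assms] that by (simp add: length_conf_word chips_at_def)
qed

lemma conf_word_word_conf:
  assumes "w \<in> conf_words m p"
  shows "conf_word m p (word_conf (m + 1 - p) p w) = w"
proof -
  have w: "distinct w" "set w = {1..m+1}" "w ! (p - 1) < w ! p"
    using assms by (auto simp: conf_words_def)
  have len: "length w = m + 1" using w distinct_card by fastforce
  have chips: "chips_at m (word_conf (m + 1 - p) p w) (int (word_site (m + 1 - p) p i)) =
      (if i \<in> {p - 1, p} then {w ! (p - 1), w ! p} else {w ! i})" if "i < m + 1" for i
    using chips_at_word_conf[OF w(1,2)] positions_at_site[OF word_site_range[OF that]] that p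
    by (auto simp: word_site_def split: if_splits)
  show ?thesis
  proof (rule nth_equalityI)
    fix i assume "i < length (conf_word m p (word_conf (m + 1 - p) p w))"
    then have "i < m + 1" by (simp add: length_conf_word)
    then show "conf_word m p (word_conf (m + 1 - p) p w) ! i = w ! i"
      using chips[of i] nth_conf_word[of i] w(3) by (auto simp: min_def max_def)
  qed (simp add: length_conf_word len)
qed

lemma bij_betw_word_conf: "bij_betw (word_conf (m + 1 - p) p) (conf_words m p) (confS m p)"
proof (rule bij_betw_byWitness[where f' = "conf_word m p"])
  show "word_conf (m + 1 - p) p ` conf_words m p \<subseteq> confS m p"
    using word_conf_in_confS by (auto simp: conf_words_def)
qed (use conf_word_word_conf word_conf_conf_word conf_word_in_conf_words in blast)+

end

section \<open>Counting configurations by their toppling result\<close>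

lemma topples_to_word_conf_iff:
  assumes "1 \<le> p" "p \<le> m" "distinct w" "set w = {1..m+1}"
  shows "topples_to m (word_conf (m + 1 - p) p w) \<pi> \<longleftrightarrow> \<pi> = bubble_output p w"
proof -
  let ?c = "word_conf (m + 1 - p) p w" and ?final = "word_conf (m + 1 - p) 0 (bubble_output p w)"
  have "length w = p + (m + 1 - p)" using assms distinct_card by fastforce
  then have topples: "(topple_step m)\<^sup>*\<^sup>* ?c ?final"
    using word_conf_topples_to_output assms(3,4) by blast
  have "distinct (bubble_output p w)" "set (bubble_output p w) = {1..m+1}"
    using mset_eq_imp_distinct_iff[OF mset_bubble_output] mset_eq_setD[OF mset_bubble_output]
      assms(3,4)
    by simp_all
  then have stable: "stable_conf m ?final" and reads: "reading m ?final (bubble_output p w)"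
    by (simp_all add: stable_word_conf_0 reading_word_conf_0)
  show ?thesis
  proof
    assume "topples_to m ?c \<pi>"
    then obtain c' where c': "(topple_step m)\<^sup>*\<^sup>* ?c c'" "stable_conf m c'" "reading m c' \<pi>"
      unfolding topples_to_def by blast
    have "c' = ?final"
      using stable_toppling_result_unique[OF word_conf_in_confS[OF assms] assms(1,2) c'(1,2)
          topples stable] .
    then show "\<pi> = bubble_output p w" using c'(3) reads reading_unique by blast
  next
    assume "\<pi> = bubble_output p w"
    then show "topples_to m ?c \<pi>" unfolding topples_to_def using topples stable reads by blast
  qed
qed

lemma card_toppling_to_eq_card_conf_words:
  assumes "1 \<le> p" "p \<le> m"
  shows "card {c \<in> confS m p. topples_to m c \<pi>} = card {w \<in> conf_words m p. bubble_output p w = \<pi>}"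
proof -
  let ?f = "word_conf (m + 1 - p) p" and ?W = "{w \<in> conf_words m p. bubble_output p w = \<pi>}"
  have bij: "bij_betw ?f (conf_words m p) (confS m p)" using assms by (rule bij_betw_word_conf)
  have iff: "topples_to m (?f w) \<pi> \<longleftrightarrow> bubble_output p w = \<pi>" if "w \<in> conf_words m p" for w
    using topples_to_word_conf_iff[OF assms] that by (auto simp: conf_words_def)
  have image: "?f ` ?W = {c \<in> confS m p. topples_to m c \<pi>}"
  proof (intro equalityI subsetI)
    fix c assume c: "c \<in> {c \<in> confS m p. topples_to m c \<pi>}"
    then have "c \<in> ?f ` conf_words m p" using bij_betw_imp_surj_on[OF bij] by blast
    then obtain w where "w \<in> conf_words m p" "c = ?f w" by blast
    then show "c \<in> ?f ` ?W" using c iff by blast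
  next
    fix c assume "c \<in> ?f ` ?W"
    then obtain w where "w \<in> conf_words m p" "bubble_output p w = \<pi>" "c = ?f w" by blast
    then show "c \<in> {c \<in> confS m p. topples_to m c \<pi>}" using iff bij_betwE[OF bij] by blast
  qed
  have "inj_on ?f ?W" using bij_betw_imp_inj_on[OF bij] by (rule inj_on_subset) blast
  from card_image[OF this] show ?thesis unfolding image by simp
qed

lemma twice_card_toppling_to:
  assumes "1 \<le> p" "p \<le> m" "distinct \<pi>" "set \<pi> = {1..m+1}"
  shows "2 * card {c \<in> confS m p. topples_to m c \<pi>} =
    card (bubbles_preimages (take (m + 1 - p) \<pi>) (drop (m + 1 - p) \<pi>))"
proof -
  have len: "length \<pi> = m + 1" using assms(3,4) distinct_card by fastforce
  have "w \<in> conf_words m p \<longleftrightarrow> w ! (p - 1) < w ! p" if "bubble_output p w = \<pi>" for w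
  proof -
    have "mset w = mset \<pi>" using that mset_bubble_output[of p w] by simp
    then have "distinct w" "set w = {1..m+1}"
      using mset_eq_imp_distinct_iff[of w \<pi>] mset_eq_setD[of w \<pi>] assms(3,4) by simp_all
    then show ?thesis by (simp add: conf_words_def)
  qed
  then have words: "{w \<in> conf_words m p. bubble_output p w = \<pi>} =
      {w. bubble_output p w = \<pi> \<and> w ! (p - 1) < w ! p}"
    by blast
  have "2 * card {c \<in> confS m p. topples_to m c \<pi>} =
      2 * card {w \<in> conf_words m p. bubble_output p w = \<pi>}"
    using assms(1,2) by (simp only: card_toppling_to_eq_card_conf_words)
  also have "\<dots> = card {w. bubble_output p w = \<pi>}"
    unfolding words using assms len by (intro twice_card_ordered_bubble_output_preimage) auto
  also have "\<dots> = card (bubbles_preimages (take (m + 1 - p) \<pi>) (drop (m + 1 - p) \<pi>))"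
    using bij_betw_same_card[OF bij_betw_bubble_output_preimages[of p \<pi>]] assms(2) len by simp
  finally show ?thesis .
qed

lemma bubbles_preimages_nonempty_if_topples_to:
  assumes "1 \<le> p" "p \<le> m" "c \<in> confS m p" "topples_to m c \<pi>"
  shows "bubbles_preimages (take (m + 1 - p) \<pi>) (drop (m + 1 - p) \<pi>) \<noteq> {}"
proof -
  obtain w where w: "w \<in> conf_words m p" "c = word_conf (m + 1 - p) p w"
    using bij_betw_imp_surj_on[OF bij_betw_word_conf[OF assms(1,2)]] assms(3) by blast
  then have "bubble_output p w = \<pi>"
    using assms(4) topples_to_word_conf_iff[OF assms(1,2)] by (simp add: conf_words_def)
  moreover have "length w = m + 1" using w(1) distinct_card by (fastforce simp: conf_words_def)
  ultimately have "length \<pi> = m + 1" using mset_bubble_output[of p w] by (metis size_mset)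
  moreover have "(take p w, drop p w) \<in> bubbles_preimages (take (length \<pi> - p) \<pi>)
      (drop (length \<pi> - p) \<pi>)"
    using bij_betwE[OF bij_betw_bubble_output_preimages[of p \<pi>]] \<open>bubble_output p w = \<pi>\<close>
      \<open>length \<pi> = m + 1\<close> assms(2) by simp
  ultimately show ?thesis by auto
qed

lemma twice_num_toppling_to:
  assumes "1 \<le> p" "p \<le> n - 1" "is_perm n \<pi>" "p_resultant n p \<pi>"
  shows "2 * num_toppling_to n p \<pi> =
    bubbles_preimage_count (num_ltr_max (perm_left n p \<pi>)) (num_rtl_min (perm_right n p \<pi>))"
proof -
  define m where "m = n - 1"
  have m: "n = m + 1" "1 \<le> p" "p \<le> m" using assms(1,2) by (auto simp: m_def)
  have \<pi>: "distinct \<pi>" "set \<pi> = {1..m+1}" using assms(3) m(1) by (simp_all add: is_perm_def)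
  let ?\<sigma> = "take (n - p) \<pi>" and ?\<tau> = "drop (n - p) \<pi>"
  have "num_toppling_to n p \<pi> = card {c \<in> confS m p. topples_to m c \<pi>}"
    by (simp add: num_toppling_to_def m_def)
  moreover have "m + 1 - p = n - p" using m(1) by simp
  ultimately have "2 * num_toppling_to n p \<pi> = card (bubbles_preimages ?\<sigma> ?\<tau>)"
    using twice_card_toppling_to[OF m(2,3) \<pi>] by simp
  also have "\<dots> = bubbles_preimage_count (num_ltr_max ?\<sigma>) (num_rtl_min ?\<tau>)"
  proof -
    obtain c where "c \<in> confS m p" "topples_to m c \<pi>"
      using assms(4) by (auto simp: p_resultant_def m_def)
    then have "bubbles_preimages ?\<sigma> ?\<tau> \<noteq> {}"
      using bubbles_preimages_nonempty_if_topples_to[OF m(2,3)] \<open>m + 1 - p = n - p\<close> by simp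
    then have nonzero: "card (bubbles_preimages ?\<sigma> ?\<tau>) \<noteq> 0"
      by (simp add: finite_bubbles_preimages)
    have "distinct (?\<sigma> @ ?\<tau>)" using \<pi>(1) by simp
    from card_bubbles_preimages[OF this] show ?thesis using nonzero by (simp split: if_split_asm)
  qed
  finally show ?thesis by (simp add: perm_left_def perm_right_def)
qed

theorem lemma2p11:
  fixes n p :: nat and \<pi> \<pi>' :: "nat list"
  assumes "n \<ge> 2" and "1 \<le> p" and "p \<le> n - 1"
    and "is_perm n \<pi>" and "is_perm n \<pi>'"
    and "p_resultant n p \<pi>" and "p_resultant n p \<pi>'"
    and "num_ltr_max (perm_left n p \<pi>) = num_ltr_max (perm_left n p \<pi>')"
    and "num_rtl_min (perm_right n p \<pi>) = num_rtl_min (perm_right n p \<pi>')"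
  shows "num_toppling_to n p \<pi> = num_toppling_to n p \<pi>'"
  using twice_num_toppling_to[OF assms(2,3,4,6)] twice_num_toppling_to[OF assms(2,3,5,7)]
    assms(8,9) by simp

end
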